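(* Let $(K,w_K)$ and $(H,w_H)$ be $(n+1)$-dimensional weighted simplicial complexes such that $(H,w_H)$ is a subcomplex of $(K,w_K)$ and their proper difference $(L,w_L)$ exists, i.e. $L=K$ as simplicial complexes, $w_L=w_K-w_H$ (with $w_H$ extended by $0$ outside $H$), and $\{F\in K:w_L(F)>0\}$ is a simplicial complex. Assume $w_K$ and $w_L$ both satisfy the normalizing condition, and denote by $\Delta^{up}_n(K)$, $\Delta^{up}_n(L)$ the corresponding (normalized) up-Laplacians $\mathcal{L}^{up}_n(K,w_K)$, $\mathcal{L}^{up}_n(L,w_L)$. Let $N=|S_n(K)|$ and let $\lambda_1\le\dots\le\lambda_N$ and $\theta_1\le\dots\le\theta_N$ be the eigenvalues of $\Delta^{up}_n(K)$ and $\Delta^{up}_n(L)$, respectively. Put $D_{\mathcal{W}}=\dim C^{n+1}(H,\mathbb{R})-\dim H^{n+1}(H,\mathbb{R})$ and $D_H=\dim C^n(H,\mathbb{R})$, with the conventions $\lambda_j=0$ for $1-D_{\mathcal{W}}\le j\le 0$ and $\lambda_j=n+2$ for $N+1\le j\le N+D_H$. Then for all $k=1,\dots,N$, $$\lambda_{k-D_{\mathcal{W}}}\le\theta_k\le\lambda_{k+D_H}.$$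
   Context: $S_j(K)$ is the set of $j$-faces; $C^j(K,\mathbb{R})$ the real cochains on oriented $j$-faces with coboundary $(\delta_j f)([v_0,\dots,v_{j+1}])=\sum_i(-1)^if([v_0,\dots,\hat v_i,\dots,v_{j+1}])$. A weight function $w:\bigcup_jS_j(K)\to[0,\infty)$ (positive for a weighted complex, zeros allowed for a degenerate one) gives $(f,g)=\sum_{F\in S_j}w(F)f([F])g([F])$ and the formal adjoint $(\delta_j^*\bar f)([F])=\sum_{\bar F\in S_{j+1},\bar F\supset F}\frac{w(\bar F)}{w(F)}\mathrm{sgn}([F],\partial[\bar F])\bar f([\bar F])$ if $w(F)\ne0$, and $0$ if $w(F)=0$, where $\mathrm{sgn}([v_0,..,\hat v_i,..,v_{j+1}],\partial[v_0,..,v_{j+1}])=(-1)^i$. $\mathcal{L}^{up}_n(K,w)=\delta_n^*\delta_n$ on $C^n$. A subcomplex $(H,w_H)$ of $(K,w_K)$ means $H\subseteq K$ a subcomplex and $w_H\le w_K$ on faces of $H$. A weight function $w$ satisfies the normalizing condition if $w(F)=\sum_{\bar F\in S_{n+1}(K),\,F\subset\bar F}w(\bar F)$ for every $F\in S_n(K)$ that is not a facet (maximal face) of $K$; the up-Laplacian for such weights is the normalized up-Laplacian $\Delta^{up}_n$. $H^{n+1}(H,\mathbb{R})$ is simplicial cohomology with real coefficients. *)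

theory Defs
  imports "HOL-Analysis.Analysis" "HOL-Library.Function_Algebras" "Jordan_Normal_Form.Char_Poly"
begin

text \<open>Each face is oriented canonically by the increasing order of its vertices; a cochain on
  oriented j-faces is determined by its values on these canonical orientations, so
  cochains are represented as real functions on vertex sets (vanishing off S_j).\<close>

definition simplicial_complex :: "'v set set \<Rightarrow> bool" where
  "simplicial_complex K \<longleftrightarrow> finite K \<and> (\<forall>F\<in>K. finite F \<and> F \<noteq> {}) \<and>
     (\<forall>F\<in>K. \<forall>G. G \<subseteq> F \<and> G \<noteq> {} \<longrightarrow> G \<in> K)"

definition faces :: "nat \<Rightarrow> 'v set set \<Rightarrow> 'v set set" where
  "faces j K = {F\<in>K. card F = Suc j}"

definition complex_dim :: "'v set set \<Rightarrow> nat \<Rightarrow> bool" where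
  "complex_dim K d \<longleftrightarrow> faces d K \<noteq> {} \<and> (\<forall>F\<in>K. card F \<le> Suc d)"

definition weighted_complex :: "'v set set \<Rightarrow> ('v set \<Rightarrow> real) \<Rightarrow> bool" where
  "weighted_complex K w \<longleftrightarrow> simplicial_complex K \<and> (\<forall>F\<in>K. w F > 0)"

definition sub_wcomplex ::
  "'v set set \<Rightarrow> ('v set \<Rightarrow> real) \<Rightarrow> 'v set set \<Rightarrow> ('v set \<Rightarrow> real) \<Rightarrow> bool" where
  "sub_wcomplex H wH K wK \<longleftrightarrow> simplicial_complex H \<and> H \<subseteq> K \<and> (\<forall>F\<in>H. wH F \<le> wK F)"

definition diff_weight ::
  "'v set set \<Rightarrow> ('v set \<Rightarrow> real) \<Rightarrow> 'v set set \<Rightarrow> ('v set \<Rightarrow> real) \<Rightarrow> 'v set \<Rightarrow> real" where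
  "diff_weight K wK H wH F = (if F \<in> K then wK F - (if F \<in> H then wH F else 0) else 0)"

definition proper_difference_exists ::
  "'v set set \<Rightarrow> ('v set \<Rightarrow> real) \<Rightarrow> 'v set set \<Rightarrow> ('v set \<Rightarrow> real) \<Rightarrow> bool" where
  "proper_difference_exists K wK H wH \<longleftrightarrow>
     simplicial_complex {F\<in>K. diff_weight K wK H wH F > 0}"

definition is_facet :: "'v set set \<Rightarrow> 'v set \<Rightarrow> bool" where
  "is_facet K F \<longleftrightarrow> F \<in> K \<and> \<not> (\<exists>G\<in>K. F \<subset> G)"

definition normalizing :: "'v set set \<Rightarrow> ('v set \<Rightarrow> real) \<Rightarrow> nat \<Rightarrow> bool" where
  "normalizing K w n \<longleftrightarrow>
     (\<forall>F\<in>faces n K. \<not> is_facet K F \<longrightarrow> w F = (\<Sum>G\<in>{G\<in>faces (Suc n) K. F \<subset> G}. w G))"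

definition vidx :: "'v::linorder \<Rightarrow> 'v set \<Rightarrow> nat" where
  "vidx v G = card {u\<in>G. u < v}"

text \<open>sgn([F], boundary [G]) for F a codimension-one face of G.\<close>
definition inc_sign :: "'v::linorder set \<Rightarrow> 'v set \<Rightarrow> real" where
  "inc_sign F G = (-1) ^ vidx (the_elem (G - F)) G"

definition cobdry :: "'v::linorder set set \<Rightarrow> nat \<Rightarrow> ('v set \<Rightarrow> real) \<Rightarrow> 'v set \<Rightarrow> real" where
  "cobdry K j f G = (if G \<in> faces (Suc j) K
      then (\<Sum>v\<in>G. (-1) ^ vidx v G * f (G - {v})) else 0)"

text \<open>Formal adjoint delta_j^* : C^(j+1)(K) \<rightarrow> C^j(K) w.r.t. the weighted inner products
  (zero on faces of weight zero).\<close>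
definition cobdry_adj ::
  "'v::linorder set set \<Rightarrow> ('v set \<Rightarrow> real) \<Rightarrow> nat \<Rightarrow> ('v set \<Rightarrow> real) \<Rightarrow> 'v set \<Rightarrow> real" where
  "cobdry_adj K w j g F = (if F \<in> faces j K \<and> w F \<noteq> 0
      then (\<Sum>G\<in>{G\<in>faces (Suc j) K. F \<subseteq> G}. (w G / w F) * inc_sign F G * g G) else 0)"

definition up_laplacian ::
  "'v::linorder set set \<Rightarrow> ('v set \<Rightarrow> real) \<Rightarrow> nat \<Rightarrow> ('v set \<Rightarrow> real) \<Rightarrow> 'v set \<Rightarrow> real" where
  "up_laplacian K w n f = cobdry_adj K w n (cobdry K n f)"

text \<open>An (arbitrary, fixed) enumeration of a finite set; spectra do not depend on it.\<close>
definition face_enum :: "'a set \<Rightarrow> nat \<Rightarrow> 'a" where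
  "face_enum S = (SOME e. bij_betw e {..<card S} S)"

definition up_laplacian_matrix ::
  "'v::linorder set set \<Rightarrow> ('v set \<Rightarrow> real) \<Rightarrow> nat \<Rightarrow> real mat" where
  "up_laplacian_matrix K w n =
     (let N = card (faces n K); e = face_enum (faces n K)
      in mat N N (\<lambda>(i,k). up_laplacian K w n (\<lambda>F. if F = e k then 1 else 0) (e i)))"

definition sorted_eigenvalues :: "real mat \<Rightarrow> nat \<Rightarrow> (nat \<Rightarrow> real) \<Rightarrow> bool" where
  "sorted_eigenvalues M N lam \<longleftrightarrow>
     (\<forall>i j. 1 \<le> i \<longrightarrow> i \<le> j \<longrightarrow> j \<le> N \<longrightarrow> lam i \<le> lam j) \<and>
     char_poly M = (\<Prod>i\<in>{1..N}. [:- lam i, 1:])"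

definition rdim :: "('v set \<Rightarrow> real) set \<Rightarrow> nat" where
  "rdim S = vector_space.dim (\<lambda>c f. (\<lambda>x. c * f x)) S"

definition cochains :: "nat \<Rightarrow> 'v set set \<Rightarrow> ('v set \<Rightarrow> real) set" where
  "cochains j K = {f. \<forall>F. F \<notin> faces j K \<longrightarrow> f F = 0}"

definition cocycles :: "nat \<Rightarrow> 'v::linorder set set \<Rightarrow> ('v set \<Rightarrow> real) set" where
  "cocycles j K = {f\<in>cochains j K. cobdry K j f = (\<lambda>_. 0)}"

definition coboundaries :: "nat \<Rightarrow> 'v::linorder set set \<Rightarrow> ('v set \<Rightarrow> real) set" where
  "coboundaries j K = (if j = 0 then {\<lambda>_. 0} else cobdry K (j - 1) ` cochains (j - 1) K)"

definition cohom_dim :: "nat \<Rightarrow> 'v::linorder set set \<Rightarrow> nat" where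
  "cohom_dim j K = rdim (cocycles j K) - rdim (coboundaries j K)"

definition ext_eig :: "nat \<Rightarrow> real \<Rightarrow> (nat \<Rightarrow> real) \<Rightarrow> int \<Rightarrow> real" where
  "ext_eig N t lam j = (if j \<le> 0 then 0 else if j > int N then t else lam (nat j))"

end

theory Submission
  imports Defs "Jordan_Normal_Form.Schur_Decomposition"
begin

text \<open>Both up-Laplacians are self-adjoint for weighted inner products on the \<open>n\<close>-cochains of \<open>K\<close>,
  so each has an orthonormal eigenbasis and the Courant--Fischer principle applies.  (For the proper
  difference \<open>L\<close> one takes the weights of \<open>K\<close> on the \<open>n\<close>-faces where \<open>L\<close> has weight zero; its
  Laplacian vanishes there.)  The weights of \<open>K\<close> and \<open>L\<close> agree off \<open>H\<close>.

  For \<open>\<theta>\<^sub>k \<le> \<lambda>\<^sub>k\<^sub>+\<^sub>D\<^sub>H\<close>, a dimension count gives a nonzero cochain in the span of the first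
  \<open>k + D\<^sub>H\<close> eigencochains of \<open>K\<close> that vanishes on the \<open>n\<close>-faces of \<open>H\<close> and is orthogonal to the
  first \<open>k - 1\<close> eigencochains of \<open>L\<close>.  Its coboundary vanishes on \<open>H\<close>, so its Rayleigh quotients
  for \<open>K\<close> and \<open>L\<close> coincide.

  For \<open>\<lambda>\<^sub>k\<^sub>-\<^sub>D\<^sub>W \<le> \<theta>\<^sub>k\<close>, one takes a cochain in the span of the first \<open>k\<close> eigencochains of
  \<open>L\<close> whose restriction to \<open>H\<close> has zero coboundary and which is orthogonal to the first
  \<open>k - D\<^sub>W - 1\<close> eigencochains of \<open>K\<close>: the first condition takes values in \<open>B\<^sup>n\<^sup>+\<^sup>1(H)\<close>, whose
  dimension is \<open>D\<^sub>W\<close> because \<open>H\<close> has no \<open>(n+2)\<close>-faces.  The coboundary again vanishes on \<open>H\<close>,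
  the norm for \<open>L\<close> is at most the norm for \<open>K\<close>, and \<open>\<theta>\<^sub>k \<ge> 0\<close>.

  The normalizing condition confines every eigenvalue to \<open>[0, n + 2]\<close>, which covers the
  conventions for indices outside \<open>{1..N}\<close>.\<close>

no_notation Inner_Product.real_inner_class.inner (infix "\<bullet>" 70)

section \<open>Real matrices\<close>

lemma mult_mat_entry:
  assumes "A \<in> carrier_mat nr n" and "B \<in> carrier_mat n nc" and "i < nr" and "k < nc"
  shows "(A * B) $$ (i,k) = (\<Sum>a<n. A $$ (i,a) * B $$ (a,k))"
  using assms by (simp add: scalar_prod_def lessThan_atLeast0)

lemma transpose_mult_mult_entry:
  assumes U: "U \<in> carrier_mat N N" and S: "S \<in> carrier_mat N N" and "j < N" and "k < N"
  shows "(transpose_mat U * S * U) $$ (j,k) = (\<Sum>a<N. \<Sum>b<N. U $$ (a,j) * S $$ (a,b) * U $$ (b,k))"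
proof -
  have "(transpose_mat U * S * U) $$ (j,k) = (\<Sum>b<N. (transpose_mat U * S) $$ (j,b) * U $$ (b,k))"
    using mult_mat_entry[of "transpose_mat U * S" N N U N j k] assms by simp
  also have "\<dots> = (\<Sum>b<N. (\<Sum>a<N. U $$ (a,j) * S $$ (a,b)) * U $$ (b,k))"
    using mult_mat_entry[of "transpose_mat U" N N S N j] assms by simp
  also have "\<dots> = (\<Sum>a<N. \<Sum>b<N. U $$ (a,j) * S $$ (a,b) * U $$ (b,k))"
    by (subst sum.swap) (simp add: sum_distrib_right)
  finally show ?thesis .
qed

lemma similar_mat_diagonal_scaling:
  fixes S :: "'a :: field mat"
  assumes S: "S \<in> carrier_mat N N" and d: "\<And>i. i < N \<Longrightarrow> d i \<noteq> 0"
  shows "similar_mat (mat N N (\<lambda>(i,k). S $$ (i,k) * d k / d i)) S"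
  unfolding similar_mat_def
proof (intro exI similar_mat_witI)
  let ?P = "mat_diag N (\<lambda>i. 1 / d i)" and ?Q = "mat_diag N d"
  have "?P * ?Q = mat_diag N (\<lambda>i. 1 / d i * d i)" "?Q * ?P = mat_diag N (\<lambda>i. d i * (1 / d i))"
    by (rule mat_diag_diag)+
  moreover have "1 / d i * d i = 1" "d i * (1 / d i) = 1" if "i < N" for i
    using d[OF that] by (auto simp: field_simps)
  ultimately show "?P * ?Q = 1\<^sub>m N" "?Q * ?P = 1\<^sub>m N"
    by (auto intro!: eq_matI simp: mat_diag_def)
  have "?P * S = mat N N (\<lambda>(i,k). 1 / d i * S $$ (i,k))"
    by (rule mat_diag_mult_left[OF S])
  moreover have "mat N N (\<lambda>(i,k). 1 / d i * S $$ (i,k)) * ?Q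
      = mat N N (\<lambda>(i,k). mat N N (\<lambda>(i,k). 1 / d i * S $$ (i,k)) $$ (i,k) * d k)"
    by (rule mat_diag_mult_right) simp
  ultimately show "mat N N (\<lambda>(i,k). S $$ (i,k) * d k / d i) = ?P * S * ?Q"
    by (auto intro!: eq_matI simp: field_simps)
qed (use S in auto)

lemma orthogonal_mat_sums:
  fixes U :: "real mat"
  assumes U: "U \<in> carrier_mat N N" and UU: "transpose_mat U * U = 1\<^sub>m N"
  shows "j < N \<Longrightarrow> k < N \<Longrightarrow> (\<Sum>a<N. U $$ (a,j) * U $$ (a,k)) = (if j = k then 1 else 0)"
    and "a < N \<Longrightarrow> c < N \<Longrightarrow> (\<Sum>j<N. U $$ (a,j) * U $$ (c,j)) = (if a = c then 1 else 0)"
proof -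
  have UtU: "transpose_mat U \<in> carrier_mat N N" using U by simp
  have "U * transpose_mat U = 1\<^sub>m N" using mat_mult_left_right_inverse[OF _ U UU] U by auto
  thus "a < N \<Longrightarrow> c < N \<Longrightarrow> (\<Sum>j<N. U $$ (a,j) * U $$ (c,j)) = (if a = c then 1 else 0)"
    using mult_mat_entry[OF U UtU, of a c] U by simp
  show "j < N \<Longrightarrow> k < N \<Longrightarrow> (\<Sum>a<N. U $$ (a,j) * U $$ (a,k)) = (if j = k then 1 else 0)"
    using UU mult_mat_entry[OF UtU U, of j k] U by simp
qed

lemma real_scalar_prod_self_nonneg: "(v :: real vec) \<bullet> v \<ge> 0"
  unfolding scalar_prod_def by (auto intro: sum_nonneg)

lemma orthonormal_basis_extending:
  fixes v :: "real vec"
  assumes v: "v \<in> carrier_vec n" and v0: "v \<noteq> 0\<^sub>v n"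
  obtains W where "W \<in> carrier_mat n n" and "transpose_mat W * W = 1\<^sub>m n"
    and "col W 0 = (1 / sqrt (v \<bullet> v)) \<cdot>\<^sub>v v"
proof -
  interpret cof_vec_space n "TYPE(real)" .
  have n: "n \<noteq> 0" using v v0 by auto
  define b where "b = basis_completion v"
  define ws where "ws = gram_schmidt n b"
  from basis_completion[OF v v0, folded b_def]
  have dist_b: "distinct b" and indep: "\<not> lin_dep (set b)" and b: "set b \<subseteq> carrier_vec n"
    and hdb: "hd b = v" and len_b: "length b = n" by auto
  from hdb len_b n obtain vs where bv: "b = v # vs" by (cases b, auto)
  from gram_schmidt_result[OF b dist_b indep refl, folded ws_def]
  have ws: "set ws \<subseteq> carrier_vec n" "corthogonal ws" "length ws = n" by (auto simp: len_b)
  from gram_schmidt_hd[OF v, of vs, folded bv] have "hd ws = v" unfolding ws_def .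
  hence ws0: "ws ! 0 = v" using ws(3) n by (cases ws, auto)
  define nf where "nf w = (1 / sqrt (w \<bullet> w)) \<cdot>\<^sub>v (w :: real vec)" for w
  define W where "W = mat_of_cols n (map nf ws)"
  have wsc: "i < n \<Longrightarrow> ws ! i \<in> carrier_vec n" for i using ws by auto
  have colW: "i < n \<Longrightarrow> col W i = nf (ws ! i)" for i
    unfolding W_def using ws(3) wsc[of i] by (simp add: nf_def)
  have orth: "nf (ws ! i) \<bullet> nf (ws ! j) = (if i = j then 1 else 0)" if "i < n" "j < n" for i j
  proof -
    have pos: "ws ! i \<bullet> ws ! i > 0"
      using corthogonalD[OF ws(2), of i i] ws(3) real_scalar_prod_self_nonneg[of "ws ! i"] that
      by auto
    have "i \<noteq> j \<Longrightarrow> ws ! i \<bullet> ws ! j = 0" using corthogonalD[OF ws(2), of i j] ws(3) that by auto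
    thus ?thesis
      using pos wsc[OF that(1)] wsc[OF that(2)]
      by (cases "i = j") (auto simp: nf_def real_sqrt_mult[symmetric] field_simps)
  qed
  show thesis
  proof (rule that)
    show W: "W \<in> carrier_mat n n" unfolding W_def using ws(3) by auto
    show "transpose_mat W * W = 1\<^sub>m n"
      by (rule eq_matI) (use W in \<open>auto simp: colW orth\<close>)
    show "col W 0 = (1 / sqrt (v \<bullet> v)) \<cdot>\<^sub>v v" using colW[of 0] n by (simp add: ws0 nf_def)
  qed
qed

text \<open>Conjugating by an orthogonal matrix whose first column is an eigenvector splits off a
  \<open>1 \<times> 1\<close> block; symmetry makes the first row vanish as well.\<close>

lemma orthogonal_conj_eigenvector_split:
  fixes A W :: "real mat"
  assumes A: "A \<in> carrier_mat n n" and sym: "transpose_mat A = A"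
    and W: "W \<in> carrier_mat n n" and WW: "transpose_mat W * W = 1\<^sub>m n"
    and ev: "A *\<^sub>v col W 0 = e \<cdot>\<^sub>v col W 0" and n: "n \<noteq> 0"
  obtains A3 where "A3 \<in> carrier_mat (n - 1) (n - 1)" and "transpose_mat A3 = A3"
    and "transpose_mat W * A * W
      = four_block_mat (mat 1 1 (\<lambda>_. e)) (0\<^sub>m 1 (n - 1)) (0\<^sub>m (n - 1) 1) A3"
proof -
  define A' where "A' = transpose_mat W * A * W"
  have A': "A' \<in> carrier_mat n n" using W A unfolding A'_def by auto
  have symA': "transpose_mat A' = A'"
    unfolding A'_def using W A sym
    by (simp add: transpose_mult[of _ n n _ n] assoc_mult_mat[of _ n n _ n _ n])
  have A'col: "A' $$ (i, 0) = (if i = 0 then e else 0)" if i: "i < n" for i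
  proof -
    have "A' = transpose_mat W * (A * W)"
      unfolding A'_def using W A by (simp add: assoc_mult_mat[of _ n n _ n _ n])
    hence "A' $$ (i, 0) = row (transpose_mat W) i \<bullet> col (A * W) 0"
      using W A i n by (simp del: col_mult2)
    also have "row (transpose_mat W) i = col W i" using W i by (simp add: row_transpose)
    also have "col (A * W) 0 = A *\<^sub>v col W 0" using W A n by (intro col_mult2[of _ n n _ n]) auto
    finally have "A' $$ (i, 0) = col W i \<bullet> (A *\<^sub>v col W 0)" .
    also have "\<dots> = e * (col W i \<bullet> col W 0)" using W i n by (simp add: ev)
    also have "col W i \<bullet> col W 0 = (transpose_mat W * W) $$ (i, 0)" using W i n by simp
    finally show ?thesis using WW i n by simp
  qed
  have A'row: "j < n \<Longrightarrow> A' $$ (0, j) = (if j = 0 then e else 0)" for j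
    using A'col[of j] arg_cong[OF symA', of "\<lambda>M. M $$ (j,0)"] A' n by auto
  define A3 where "A3 = mat (n - 1) (n - 1) (\<lambda>(i,j). A' $$ (Suc i, Suc j))"
  show thesis
  proof (rule that[of A3])
    show "A3 \<in> carrier_mat (n - 1) (n - 1)" unfolding A3_def by auto
    show "transpose_mat A3 = A3"
      by (rule eq_matI, insert symA' A', auto simp: A3_def,
          metis Suc_less_eq Suc_pred index_transpose_mat(1) n neq0_conv carrier_matD)
    show "transpose_mat W * A * W
      = four_block_mat (mat 1 1 (\<lambda>_. e)) (0\<^sub>m 1 (n - 1)) (0\<^sub>m (n - 1) 1) A3"
      by (rule eq_matI, insert A' n A'col A'row, auto simp: A'_def[symmetric] A3_def)
  qed
qed

lemma orthogonal_diagonalization_extend: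
  fixes A W A3 U3 :: "real mat"
  assumes A: "A \<in> carrier_mat n n" and W: "W \<in> carrier_mat n n"
    and WW: "transpose_mat W * W = 1\<^sub>m n" and n: "n \<noteq> 0"
    and split: "transpose_mat W * A * W
      = four_block_mat (mat 1 1 (\<lambda>_. e)) (0\<^sub>m 1 (n - 1)) (0\<^sub>m (n - 1) 1) A3"
    and A3: "A3 \<in> carrier_mat (n - 1) (n - 1)" and U3: "U3 \<in> carrier_mat (n - 1) (n - 1)"
    and U3o: "transpose_mat U3 * U3 = 1\<^sub>m (n - 1)"
    and U3d: "transpose_mat U3 * A3 * U3 = mat_diag (n - 1) (\<lambda>i. es ! i)"
  shows "\<exists>U \<in> carrier_mat n n. transpose_mat U * U = 1\<^sub>m n \<and>
           transpose_mat U * A * U = mat_diag n (\<lambda>i. (e # es) ! i)"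
proof -
  let ?n1 = "n - 1"
  have nn: "1 + ?n1 = n" using n by simp
  define A1 where "A1 = mat 1 1 (\<lambda>_. e)"
  have A1: "A1 \<in> carrier_mat 1 1" unfolding A1_def by simp
  note split = split[folded A1_def]
  define B where "B = four_block_mat (1\<^sub>m 1) (0\<^sub>m 1 ?n1) (0\<^sub>m ?n1 1) U3"
  have B: "B \<in> carrier_mat n n"
    unfolding B_def using U3 four_block_carrier_mat[of "1\<^sub>m 1" 1 1 U3 ?n1 ?n1] nn by auto
  have Bt: "transpose_mat B = four_block_mat (1\<^sub>m 1) (0\<^sub>m 1 ?n1) (0\<^sub>m ?n1 1) (transpose_mat U3)"
    unfolding B_def by (subst transpose_four_block_mat, insert U3, auto)
  have BB: "transpose_mat B * B = 1\<^sub>m n"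
    unfolding Bt unfolding B_def by (subst mult_four_block_mat, insert U3 U3o nn, auto)
  have BAB: "transpose_mat B * (transpose_mat W * A * W) * B
      = four_block_mat A1 (0\<^sub>m 1 ?n1) (0\<^sub>m ?n1 1) (mat_diag ?n1 (\<lambda>i. es ! i))"
    unfolding Bt unfolding B_def split U3d[symmetric]
    by (subst mult_four_block_mat, insert U3 A1 A3, auto,
        subst mult_four_block_mat, insert U3 A1 A3, auto)
  have Ut: "transpose_mat (W * B) = transpose_mat B * transpose_mat W"
    using W B by (simp add: transpose_mult)
  have "transpose_mat (W * B) * (W * B) = transpose_mat B * (transpose_mat W * W) * B"
    unfolding Ut using W B by (simp add: assoc_mult_mat[of _ n n _ n _ n])
  hence orth: "transpose_mat (W * B) * (W * B) = 1\<^sub>m n" using WW BB B by simp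
  have "transpose_mat (W * B) * A * (W * B) = transpose_mat B * (transpose_mat W * A * W) * B"
    unfolding Ut using W B A by (simp add: assoc_mult_mat[of _ n n _ n _ n])
  also have "\<dots> = four_block_mat A1 (0\<^sub>m 1 ?n1) (0\<^sub>m ?n1 1) (mat_diag ?n1 (\<lambda>i. es ! i))"
    by (rule BAB)
  also have "\<dots> = mat_diag n (\<lambda>i. (e # es) ! i)"
    by (rule eq_matI, insert nn, auto simp: mat_diag_def A1_def)
  finally show ?thesis using W B orth by (intro bexI[of _ "W * B"] conjI) auto
qed

theorem real_symmetric_orthogonally_diagonalizable:
  fixes A :: "real mat"
  assumes "A \<in> carrier_mat n n" and "transpose_mat A = A"
    and "char_poly A = (\<Prod>e\<leftarrow>es. [:- e, 1:])"
  shows "\<exists>U \<in> carrier_mat n n. transpose_mat U * U = 1\<^sub>m n \<and>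
           transpose_mat U * A * U = mat_diag n (\<lambda>i. es ! i)"
  using assms
proof (induct es arbitrary: n A)
  case Nil
  with degree_monic_char_poly[of A n] have "n = 0" by auto
  thus ?case using Nil by (intro bexI[of _ "1\<^sub>m 0"], auto intro!: eq_matI simp: mat_diag_def)
next
  case (Cons e es n A)
  from Cons have A: "A \<in> carrier_mat n n" and sym: "transpose_mat A = A" by auto
  let ?n1 = "n - 1"
  have cp: "char_poly A = [: -e, 1 :] * (\<Prod>e \<leftarrow> es. [:- e, 1:])" using Cons by auto
  have "monic (\<Prod>e\<leftarrow> es. [:- e, 1:])" by (rule monic_prod_list, auto)
  hence "degree (char_poly A) = Suc (degree (\<Prod>e\<leftarrow> es. [:- e, 1:]))" unfolding cp
    by (subst degree_mult_eq, auto)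
  with degree_monic_char_poly[OF A] have n: "n \<noteq> 0" by auto
  have "eigenvalue A e" unfolding eigenvalue_root_char_poly[OF A] cp by simp
  from find_eigenvector[OF A this] obtain v where "eigenvector A v e" by blast
  hence v: "v \<in> carrier_vec n" and v0: "v \<noteq> 0\<^sub>v n" and Av: "A *\<^sub>v v = e \<cdot>\<^sub>v v"
    using A unfolding eigenvector_def by auto
  obtain W where W: "W \<in> carrier_mat n n" and WW: "transpose_mat W * W = 1\<^sub>m n"
    and W0: "col W 0 = (1 / sqrt (v \<bullet> v)) \<cdot>\<^sub>v v"
    by (rule orthonormal_basis_extending[OF v v0])
  have "A *\<^sub>v col W 0 = e \<cdot>\<^sub>v col W 0"
    unfolding W0 using A v Av by (simp add: mult_mat_vec smult_smult_assoc mult.commute)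
  then obtain A3 where A3: "A3 \<in> carrier_mat ?n1 ?n1" and symA3: "transpose_mat A3 = A3"
    and split: "transpose_mat W * A * W = four_block_mat (mat 1 1 (\<lambda>_. e)) (0\<^sub>m 1 ?n1) (0\<^sub>m ?n1 1) A3"
    by (rule orthogonal_conj_eigenvector_split[OF A sym W WW _ n])
  have WWt: "W * transpose_mat W = 1\<^sub>m n" using mat_mult_left_right_inverse[OF _ W WW] W by auto
  define A1 where "A1 = mat 1 1 (\<lambda>_. e)"
  have A1: "A1 \<in> carrier_mat 1 1" unfolding A1_def by simp
  have "similar_mat_wit (transpose_mat W * A * W) A (transpose_mat W) W"
    by (rule similar_mat_witI[of _ _ n], insert W A WW WWt, auto)
  hence "[: -e, 1 :] * (\<Prod> e \<leftarrow> es. [:- e, 1:]) = char_poly (transpose_mat W * A * W)"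
    unfolding cp[symmetric] by (intro char_poly_similar[symmetric]) (auto simp: similar_mat_def)
  also have "\<dots> = char_poly A1 * char_poly A3"
    unfolding split A1_def[symmetric] by (rule char_poly_four_block_zeros_col[OF A1 _ A3]) auto
  also have "char_poly A1 = [: -e, 1 :]"
    by (simp add: A1_def char_poly_defs det_def sign_def)
  finally have "[: -e, 1 :] * char_poly A3 = [: -e, 1 :] * (\<Prod> e \<leftarrow> es. [:- e, 1:])" ..
  hence "char_poly A3 = (\<Prod> e \<leftarrow> es. [:- e, 1:])"
    by (metis mult_cancel_left pCons_eq_0_iff zero_neq_one)
  from Cons(1)[OF A3 symA3 this] obtain U3 where "U3 \<in> carrier_mat ?n1 ?n1"
    and "transpose_mat U3 * U3 = 1\<^sub>m ?n1"
    and "transpose_mat U3 * A3 * U3 = mat_diag ?n1 (\<lambda>i. es ! i)"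
    by auto
  thus ?case by (rule orthogonal_diagonalization_extend[OF A W WW n split A3])
qed

section \<open>Faces and coboundaries\<close>

lemma face_enum_bij:
  assumes "finite S" shows "bij_betw (face_enum S) {..<card S} S"
proof -
  have "\<exists>e. bij_betw e {..<card S} S"
    using ex_bij_betw_nat_finite[OF assms] by (auto simp: lessThan_atLeast0)
  thus ?thesis unfolding face_enum_def by (rule someI_ex)
qed

lemma faces_iff: "F \<in> faces j K \<longleftrightarrow> F \<in> K \<and> card F = Suc j"
  unfolding faces_def by simp

lemma finite_faces: "simplicial_complex K \<Longrightarrow> finite (faces j K)"
  unfolding faces_def simplicial_complex_def by simp

lemma simplicial_complex_face_finite: "simplicial_complex K \<Longrightarrow> F \<in> K \<Longrightarrow> finite F"
  unfolding simplicial_complex_def by blast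

lemma simplicial_complex_subface:
  "simplicial_complex K \<Longrightarrow> F \<in> K \<Longrightarrow> G \<subseteq> F \<Longrightarrow> G \<noteq> {} \<Longrightarrow> G \<in> K"
  unfolding simplicial_complex_def by blast

lemma facet_removal_in_faces:
  assumes sc: "simplicial_complex K" and G: "G \<in> faces (Suc j) K" and v: "v \<in> G"
  shows "G - {v} \<in> faces j K"
proof -
  have GK: "G \<in> K" and "card G = Suc (Suc j)" using G by (auto simp: faces_iff)
  hence card: "card (G - {v}) = Suc j"
    using v simplicial_complex_face_finite[OF sc GK] by simp
  hence "G - {v} \<noteq> {}" by (metis card.empty nat.distinct(1))
  hence "G - {v} \<in> K" by (rule simplicial_complex_subface[OF sc GK, rotated]) blast
  thus ?thesis using card by (simp add: faces_iff)
qed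

lemma codim_one_face_obtain:
  assumes sc: "simplicial_complex K" and "G \<in> faces (Suc j) K" and "F \<in> faces j K"
    and FG: "F \<subseteq> G"
  obtains v where "v \<in> G" and "G - F = {v}" and "F = G - {v}"
proof -
  have "G \<in> K" "card G = Suc (Suc j)" "card F = Suc j"
    using assms by (auto simp: faces_iff)
  moreover from this have "finite G" by (simp add: simplicial_complex_face_finite[OF sc])
  ultimately have "card (G - F) = 1" using card_Diff_subset[OF finite_subset[OF FG] FG] by simp
  then obtain v where "G - F = {v}" by (rule card_1_singletonE)
  with FG show thesis by (intro that) auto
qed

lemma sum_codim_one_faces:
  assumes sc: "simplicial_complex K" and G: "G \<in> faces (Suc n) K"
  shows "(\<Sum>v\<in>G. h v (G - {v})) = (\<Sum>F\<in>{F\<in>faces n K. F \<subseteq> G}. h (the_elem (G - F)) F)"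
proof (rule sum.reindex_bij_witness[of _ "\<lambda>F. the_elem (G - F)" "\<lambda>v. G - {v}"])
  fix v assume v: "v \<in> G"
  hence "G - (G - {v}) = {v}" by auto
  thus "the_elem (G - (G - {v})) = v" by simp
  show "G - {v} \<in> {F \<in> faces n K. F \<subseteq> G}" using facet_removal_in_faces[OF sc G v] by auto
  show "h (the_elem (G - (G - {v}))) (G - {v}) = h v (G - {v})" using \<open>G - (G - {v}) = {v}\<close> by simp
next
  fix F assume "F \<in> {F \<in> faces n K. F \<subseteq> G}"
  then obtain v where "v \<in> G" "G - F = {v}" "F = G - {v}"
    using codim_one_face_obtain[OF sc G] by blast
  thus "G - {the_elem (G - F)} = F" "the_elem (G - F) \<in> G" by auto
qed

lemma cobdry_eq_sum_faces:
  assumes "simplicial_complex K" and "G \<in> faces (Suc n) K"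
  shows "cobdry K n f G = (\<Sum>F\<in>{F\<in>faces n K. F \<subseteq> G}. inc_sign F G * f F)"
  using sum_codim_one_faces[OF assms, of "\<lambda>v F. (-1) ^ vidx v G * f F"] assms(2)
  unfolding cobdry_def inc_sign_def by simp

lemma cobdry_sum:
  "cobdry K n (\<lambda>x. \<Sum>i\<in>I. c i * g i x) G = (\<Sum>i\<in>I. c i * cobdry K n (g i) G)"
proof (cases "G \<in> faces (Suc n) K")
  case True
  have "(\<Sum>v\<in>G. (-1) ^ vidx v G * (\<Sum>i\<in>I. c i * g i (G - {v})))
      = (\<Sum>v\<in>G. \<Sum>i\<in>I. c i * ((-1) ^ vidx v G * g i (G - {v})))"
    by (simp add: sum_distrib_left ac_simps)
  also have "\<dots> = (\<Sum>i\<in>I. c i * (\<Sum>v\<in>G. (-1) ^ vidx v G * g i (G - {v})))"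
    by (subst sum.swap) (simp add: sum_distrib_left)
  finally show ?thesis using True unfolding cobdry_def by simp
qed (simp add: cobdry_def)

lemma cobdry_add: "cobdry K n (\<lambda>x. f x + g x) G = cobdry K n f G + cobdry K n g G"
  unfolding cobdry_def by (simp add: algebra_simps sum.distrib)

lemma cobdry_scale: "cobdry K n (\<lambda>x. a * f x) G = a * cobdry K n f G"
  unfolding cobdry_def by (simp add: algebra_simps sum_distrib_left)

lemma cobdry_zero: "cobdry K n (\<lambda>_. 0) G = 0"
  unfolding cobdry_def by simp

lemma cobdry_subcomplex:
  assumes "simplicial_complex H" and "G \<in> faces (Suc n) K" and "G \<in> H"
  shows "cobdry K n f G = cobdry H n (\<lambda>F. if F \<in> faces n H then f F else 0) G"
proof -
  have GH: "G \<in> faces (Suc n) H" using assms by (simp add: faces_iff)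
  show ?thesis unfolding cobdry_def
    using assms(2) GH facet_removal_in_faces[OF assms(1) GH] by (auto intro!: sum.cong)
qed

section \<open>The up-Laplacian as a quadratic form\<close>

definition point_indicator :: "'a \<Rightarrow> 'a \<Rightarrow> real" where
  "point_indicator a = (\<lambda>z. if z = a then 1 else 0)"

definition cochain_inner ::
  "'v set set \<Rightarrow> nat \<Rightarrow> ('v set \<Rightarrow> real) \<Rightarrow> ('v set \<Rightarrow> real) \<Rightarrow> ('v set \<Rightarrow> real) \<Rightarrow> real" where
  "cochain_inner K j w f g = (\<Sum>F\<in>faces j K. w F * f F * g F)"

definition coboundary_form ::
  "'v::linorder set set \<Rightarrow> ('v set \<Rightarrow> real) \<Rightarrow> nat \<Rightarrow> ('v set \<Rightarrow> real) \<Rightarrow> ('v set \<Rightarrow> real) \<Rightarrow> real" where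
  "coboundary_form K w n f g = cochain_inner K (Suc n) w (cobdry K n f) (cobdry K n g)"

lemma cochain_inner_commute: "cochain_inner K j w f g = cochain_inner K j w g f"
  unfolding cochain_inner_def by (simp add: ac_simps)

lemma cochain_inner_sum_left:
  "cochain_inner K j w (\<lambda>x. \<Sum>i\<in>I. c i * g i x) h = (\<Sum>i\<in>I. c i * cochain_inner K j w (g i) h)"
proof -
  have "cochain_inner K j w (\<lambda>x. \<Sum>i\<in>I. c i * g i x) h
      = (\<Sum>F\<in>faces j K. \<Sum>i\<in>I. c i * (w F * g i F * h F))"
    unfolding cochain_inner_def
    by (rule sum.cong[OF refl]) (simp add: sum_distrib_left sum_distrib_right ac_simps)
  also have "\<dots> = (\<Sum>i\<in>I. c i * cochain_inner K j w (g i) h)"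
    unfolding cochain_inner_def by (subst sum.swap) (simp add: sum_distrib_left)
  finally show ?thesis .
qed

lemma cochain_inner_add_left:
  "cochain_inner K j w (\<lambda>x. f x + g x) h = cochain_inner K j w f h + cochain_inner K j w g h"
  unfolding cochain_inner_def by (simp add: algebra_simps sum.distrib)

lemma cochain_inner_scale_left:
  "cochain_inner K j w (\<lambda>x. a * f x) h = a * cochain_inner K j w f h"
  unfolding cochain_inner_def by (simp add: algebra_simps sum_distrib_left)

lemma cochain_inner_mono_weight:
  assumes "\<And>F. F \<in> faces j K \<Longrightarrow> v F \<le> w F"
  shows "cochain_inner K j v f f \<le> cochain_inner K j w f f"
  unfolding cochain_inner_def
  by (rule sum_mono) (simp add: assms mult.assoc mult_right_mono)

lemma cochain_inner_cong_weight:
  assumes "\<And>F. F \<in> faces j K \<Longrightarrow> f F \<noteq> 0 \<Longrightarrow> v F = w F"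
  shows "cochain_inner K j v f f = cochain_inner K j w f f"
  unfolding cochain_inner_def by (rule sum.cong) (use assms in auto)

lemma coboundary_form_commute: "coboundary_form K w n f g = coboundary_form K w n g f"
  unfolding coboundary_form_def by (rule cochain_inner_commute)

lemma coboundary_form_sum_left:
  "coboundary_form K w n (\<lambda>x. \<Sum>i\<in>I. c i * g i x) h
     = (\<Sum>i\<in>I. c i * coboundary_form K w n (g i) h)"
  unfolding coboundary_form_def cobdry_sum by (rule cochain_inner_sum_left)

lemma coboundary_form_sums:
  "coboundary_form K w n (\<lambda>x. \<Sum>a\<in>A. c a * g a x) (\<lambda>x. \<Sum>b\<in>B. d b * h b x)
     = (\<Sum>a\<in>A. \<Sum>b\<in>B. c a * d b * coboundary_form K w n (g a) (h b))"
proof -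
  have "coboundary_form K w n (g a) (\<lambda>x. \<Sum>b\<in>B. d b * h b x)
      = (\<Sum>b\<in>B. d b * coboundary_form K w n (g a) (h b))" for a
    by (subst coboundary_form_commute, subst coboundary_form_sum_left)
       (simp add: coboundary_form_commute)
  thus ?thesis
    by (simp add: coboundary_form_sum_left sum_distrib_left mult.assoc)
qed

lemma coboundary_form_nonneg:
  "(\<And>G. G \<in> faces (Suc n) K \<Longrightarrow> 0 \<le> w G) \<Longrightarrow> 0 \<le> coboundary_form K w n f f"
  unfolding coboundary_form_def cochain_inner_def
  by (rule sum_nonneg) (simp add: mult.assoc)

lemma coboundary_form_cong_weight:
  assumes "\<And>G. G \<in> faces (Suc n) K \<Longrightarrow> cobdry K n f G \<noteq> 0 \<Longrightarrow> v G = w G"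
  shows "coboundary_form K v n f f = coboundary_form K w n f f"
  unfolding coboundary_form_def by (rule cochain_inner_cong_weight) (use assms in auto)

lemma cobdry_point_indicator:
  assumes sc: "simplicial_complex K" and G: "G \<in> faces (Suc n) K" and F: "F \<in> faces n K"
  shows "cobdry K n (point_indicator F) G = (if F \<subseteq> G then inc_sign F G else 0)"
  unfolding cobdry_eq_sum_faces[OF sc G] point_indicator_def
  using F by (simp add: sum.delta finite_faces[OF sc] if_distrib cong: if_cong)

lemma up_laplacian_eq_coboundary_form:
  assumes sc: "simplicial_complex K" and F: "F \<in> faces n K" and wF: "w F \<noteq> 0"
  shows "up_laplacian K w n f F = coboundary_form K w n (point_indicator F) f / w F"
proof -
  have "up_laplacian K w n f F
      = (\<Sum>G\<in>{G\<in>faces (Suc n) K. F \<subseteq> G}. w G / w F * inc_sign F G * cobdry K n f G)"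
    unfolding up_laplacian_def cobdry_adj_def using F wF by simp
  also have "\<dots> = (\<Sum>G\<in>faces (Suc n) K.
      if F \<subseteq> G then w G / w F * inc_sign F G * cobdry K n f G else 0)"
    by (rule sum.inter_filter[OF finite_faces[OF sc]])
  also have "\<dots> = (\<Sum>G\<in>faces (Suc n) K.
      w G * cobdry K n (point_indicator F) G * cobdry K n f G) / w F"
    unfolding sum_divide_distrib
    by (rule sum.cong[OF refl]) (simp add: cobdry_point_indicator[OF sc _ F])
  finally show ?thesis unfolding coboundary_form_def cochain_inner_def .
qed

lemma coboundary_form_point_indicator_zero:
  assumes sc: "simplicial_complex K" and F: "F \<in> faces n K"
    and zero: "\<And>G. G \<in> faces (Suc n) K \<Longrightarrow> F \<subseteq> G \<Longrightarrow> w G = 0"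
  shows "coboundary_form K w n (point_indicator F) g = 0"
  unfolding coboundary_form_def cochain_inner_def
  by (rule sum.neutral) (simp add: cobdry_point_indicator[OF sc _ F] zero)

lemma up_laplacian_matrix_entry:
  fixes K :: "'v::linorder set set"
  assumes sc: "simplicial_complex K" and "i < card (faces n K)" and "k < card (faces n K)"
    and u_w: "\<And>F. F \<in> faces n K \<Longrightarrow> w F \<noteq> 0 \<Longrightarrow> u F = w F"
    and zero: "\<And>F G. F \<in> faces n K \<Longrightarrow> G \<in> faces (Suc n) K \<Longrightarrow> F \<subseteq> G \<Longrightarrow> w F = 0 \<Longrightarrow> w G = 0"
  defines "e \<equiv> face_enum (faces n K)"
  shows "up_laplacian_matrix K w n $$ (i,k)
    = coboundary_form K w n (point_indicator (e i)) (point_indicator (e k)) / u (e i)"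
proof -
  have ei: "e i \<in> faces n K"
    using face_enum_bij[OF finite_faces[OF sc]] assms(2) unfolding e_def bij_betw_def by auto
  have "up_laplacian_matrix K w n $$ (i,k) = up_laplacian K w n (point_indicator (e k)) (e i)"
    using assms(2,3) unfolding up_laplacian_matrix_def Let_def e_def point_indicator_def by simp
  moreover have "coboundary_form K w n (point_indicator (e i)) (point_indicator (e k)) = 0"
    if "w (e i) = 0"
    using coboundary_form_point_indicator_zero[OF sc ei] zero[OF ei _ _ that] by blast
  ultimately show ?thesis
    using up_laplacian_eq_coboundary_form[OF sc ei] u_w[OF ei]
    by (cases "w (e i) = 0") (simp_all add: up_laplacian_def cobdry_adj_def)
qed

section \<open>Orthonormal eigenbases\<close>

text \<open>Orthonormality is taken for the weights \<open>u\<close>,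
  which agree with \<open>w\<close> except on the \<open>n\<close>-faces of weight zero, where \<open>u\<close> is positive; on
  those faces \<open>up_laplacian\<close> vanishes.  The eigenvalue of \<open>phi j\<close> is \<open>lam (Suc j)\<close>.\<close>

definition up_eigenbasis ::
  "'v::linorder set set \<Rightarrow> ('v set \<Rightarrow> real) \<Rightarrow> nat \<Rightarrow> ('v set \<Rightarrow> real) \<Rightarrow> (nat \<Rightarrow> real)
    \<Rightarrow> (nat \<Rightarrow> 'v set \<Rightarrow> real) \<Rightarrow> bool" where
  "up_eigenbasis K w n u lam phi \<longleftrightarrow>
     (\<forall>j<card (faces n K). phi j \<in> cochains n K) \<and>
     (\<forall>j<card (faces n K). \<forall>k<card (faces n K).
        cochain_inner K n u (phi j) (phi k) = (if j = k then 1 else 0)) \<and>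
     (\<forall>j<card (faces n K). \<forall>k<card (faces n K).
        coboundary_form K w n (phi j) (phi k) = (if j = k then lam (Suc j) else 0)) \<and>
     (\<forall>f\<in>cochains n K. f = (\<lambda>x. \<Sum>j<card (faces n K). cochain_inner K n u f (phi j) * phi j x))"

definition column_cochain :: "(nat \<Rightarrow> 'a) \<Rightarrow> nat \<Rightarrow> ('a \<Rightarrow> real) \<Rightarrow> real mat \<Rightarrow> nat \<Rightarrow> 'a \<Rightarrow> real" where
  "column_cochain e N u U j = (\<lambda>x. \<Sum>a<N. U $$ (a,j) / sqrt (u (e a)) * point_indicator (e a) x)"

context
  fixes K :: "'v::linorder set set" and n :: nat and e :: "nat \<Rightarrow> 'v set"
  assumes sc: "simplicial_complex K" and e: "bij_betw e {..<card (faces n K)} (faces n K)"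
begin

lemma indicator_combination_at:
  assumes "a < card (faces n K)"
  shows "(\<Sum>b<card (faces n K). c b * point_indicator (e b) (e a)) = c a"
proof -
  have "(\<Sum>b<card (faces n K). c b * point_indicator (e b) (e a))
      = (\<Sum>b<card (faces n K). if b = a then c a else 0)"
    using e assms unfolding bij_betw_def inj_on_def point_indicator_def
    by (intro sum.cong) auto
  thus ?thesis using assms by simp
qed

lemma indicator_combination_cochain:
  "(\<lambda>x. \<Sum>b<card (faces n K). c b * point_indicator (e b) x) \<in> cochains n K"
  using e unfolding cochains_def point_indicator_def bij_betw_def
  by (auto intro!: sum.neutral)

lemma cochain_inner_indicator_combinations:
  "cochain_inner K n u (\<lambda>x. \<Sum>a<card (faces n K). c a * point_indicator (e a) x)
     (\<lambda>x. \<Sum>b<card (faces n K). d b * point_indicator (e b) x)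
   = (\<Sum>a<card (faces n K). u (e a) * c a * d a)"
  unfolding cochain_inner_def sum.reindex_bij_betw[OF e, symmetric]
  by (rule sum.cong[OF refl]) (simp add: indicator_combination_at)

lemma cochain_inner_indicator_right:
  assumes "a < card (faces n K)"
  shows "cochain_inner K n u f (point_indicator (e a)) = u (e a) * f (e a)"
proof -
  have "cochain_inner K n u f (point_indicator (e a))
      = (\<Sum>b<card (faces n K). (u (e b) * f (e b)) * point_indicator (e b) (e a))"
    unfolding cochain_inner_def sum.reindex_bij_betw[OF e, symmetric]
    by (rule sum.cong[OF refl]) (auto simp: point_indicator_def)
  thus ?thesis using indicator_combination_at[OF assms] by simp
qed

lemma column_cochain_cochain: "column_cochain e (card (faces n K)) u U j \<in> cochains n K"
  unfolding column_cochain_def by (rule indicator_combination_cochain)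

lemma column_cochain_at:
  "c < card (faces n K)
    \<Longrightarrow> column_cochain e (card (faces n K)) u U j (e c) = U $$ (c,j) / sqrt (u (e c))"
  unfolding column_cochain_def by (rule indicator_combination_at)

lemma cochain_inner_column_cochains:
  assumes u_pos: "\<And>F. F \<in> faces n K \<Longrightarrow> 0 < u F"
  shows "cochain_inner K n u (column_cochain e (card (faces n K)) u U j)
      (column_cochain e (card (faces n K)) u U k)
    = (\<Sum>a<card (faces n K). U $$ (a,j) * U $$ (a,k))"
  unfolding column_cochain_def cochain_inner_indicator_combinations
proof (rule sum.cong[OF refl])
  fix a assume "a \<in> {..<card (faces n K)}"
  hence "0 < u (e a)" using e u_pos unfolding bij_betw_def by auto
  thus "u (e a) * (U $$ (a,j) / sqrt (u (e a))) * (U $$ (a,k) / sqrt (u (e a)))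
      = U $$ (a,j) * U $$ (a,k)"
    by (simp add: field_simps)
qed

lemma column_cochain_expansion:
  assumes u_pos: "\<And>F. F \<in> faces n K \<Longrightarrow> 0 < u F"
    and U: "U \<in> carrier_mat (card (faces n K)) (card (faces n K))"
    and UU: "transpose_mat U * U = 1\<^sub>m (card (faces n K))" and f: "f \<in> cochains n K"
  defines "N \<equiv> card (faces n K)"
  shows "f = (\<lambda>x. \<Sum>j<N.
    cochain_inner K n u f (column_cochain e N u U j) * column_cochain e N u U j x)"
proof
  define s where "s a = sqrt (u (e a))" for a
  have s: "0 < s a" "s a * s a = u (e a)" if "a < N" for a
  proof -
    have "e a \<in> faces n K" using e that unfolding N_def bij_betw_def by auto
    thus "0 < s a" "s a * s a = u (e a)" using u_pos unfolding s_def by (auto simp: less_imp_le)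
  qed
  have coeff: "cochain_inner K n u f (column_cochain e N u U j)
      = (\<Sum>a<N. U $$ (a,j) * s a * f (e a))" for j
    unfolding column_cochain_def cochain_inner_commute[of K n u f] cochain_inner_sum_left N_def
    by (rule sum.cong[OF refl])
      (simp add: cochain_inner_commute[of K n u _ f] cochain_inner_indicator_right
        s(2)[unfolded N_def, symmetric] s(1)[unfolded N_def, THEN less_imp_neq, symmetric]
        abs_of_pos[OF s(1)[unfolded N_def]] s_def[symmetric])
  fix x
  show "f x = (\<Sum>j<N. cochain_inner K n u f (column_cochain e N u U j) * column_cochain e N u U j x)"
  proof (cases "x \<in> faces n K")
    case True
    then obtain c where c: "c < N" and x: "x = e c" using e unfolding N_def bij_betw_def by auto
    have "(\<Sum>j<N. cochain_inner K n u f (column_cochain e N u U j) * column_cochain e N u U j x)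
        = (\<Sum>j<N. \<Sum>a<N. s a * f (e a) / s c * (U $$ (a,j) * U $$ (c,j)))"
      unfolding coeff x column_cochain_at[OF c[unfolded N_def], folded N_def] s_def[symmetric]
        sum_distrib_right
      by (intro sum.cong refl) simp
    also have "\<dots> = (\<Sum>a<N. s a * f (e a) / s c * (\<Sum>j<N. U $$ (a,j) * U $$ (c,j)))"
      by (subst sum.swap) (simp add: sum_distrib_left)
    also have "\<dots> = f x"
      using c s(1)[OF c]
      by (simp add: x orthogonal_mat_sums(2)[OF U UU, folded N_def] if_distrib cong: if_cong)
    finally show ?thesis ..
  next
    case False
    thus ?thesis using f column_cochain_cochain unfolding cochains_def N_def by simp
  qed
qed

end

text \<open>The symmetrisation \<open>D\<^sup>1\<^sup>/\<^sup>2 M D\<^sup>-\<^sup>1\<^sup>/\<^sup>2\<close> of the up-Laplacian matrix \<open>M\<close>,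
  where \<open>D\<close> is the diagonal matrix of the weights \<open>u\<close>.\<close>

definition sym_up_laplacian_matrix ::
  "'v::linorder set set \<Rightarrow> ('v set \<Rightarrow> real) \<Rightarrow> nat \<Rightarrow> ('v set \<Rightarrow> real) \<Rightarrow> real mat" where
  "sym_up_laplacian_matrix K w n u =
     (let N = card (faces n K); e = face_enum (faces n K)
      in mat N N (\<lambda>(a,b). coboundary_form K w n (point_indicator (e a)) (point_indicator (e b))
                           / (sqrt (u (e a)) * sqrt (u (e b)))))"

lemma sym_up_laplacian_matrix_carrier:
  "sym_up_laplacian_matrix K w n u \<in> carrier_mat (card (faces n K)) (card (faces n K))"
  unfolding sym_up_laplacian_matrix_def Let_def by simp

lemma sym_up_laplacian_matrix_symmetric:
  "transpose_mat (sym_up_laplacian_matrix K w n u) = sym_up_laplacian_matrix K w n u"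
  unfolding sym_up_laplacian_matrix_def Let_def
  by (rule eq_matI) (auto simp: coboundary_form_commute mult.commute)

lemma similar_sym_up_laplacian_matrix:
  fixes K :: "'v::linorder set set"
  assumes sc: "simplicial_complex K"
    and u_pos: "\<And>F. F \<in> faces n K \<Longrightarrow> 0 < u F"
    and u_w: "\<And>F. F \<in> faces n K \<Longrightarrow> w F \<noteq> 0 \<Longrightarrow> u F = w F"
    and zero: "\<And>F G. F \<in> faces n K \<Longrightarrow> G \<in> faces (Suc n) K \<Longrightarrow> F \<subseteq> G \<Longrightarrow> w F = 0 \<Longrightarrow> w G = 0"
  shows "similar_mat (up_laplacian_matrix K w n) (sym_up_laplacian_matrix K w n u)"
proof -
  define N where "N = card (faces n K)"
  define e where "e = face_enum (faces n K)"
  define s where "s a = sqrt (u (e a))" for a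
  define S where "S = sym_up_laplacian_matrix K w n u"
  have S: "S \<in> carrier_mat N N" unfolding S_def N_def by (rule sym_up_laplacian_matrix_carrier)
  have ue: "a < N \<Longrightarrow> 0 < u (e a)" for a
    using face_enum_bij[OF finite_faces[OF sc]] u_pos unfolding N_def e_def bij_betw_def by auto
  have "up_laplacian_matrix K w n = mat N N (\<lambda>(a,b). S $$ (a,b) * s b / s a)"
  proof (rule eq_matI)
    fix a b assume "a < dim_row (mat N N (\<lambda>(a,b). S $$ (a,b) * s b / s a))"
      and "b < dim_col (mat N N (\<lambda>(a,b). S $$ (a,b) * s b / s a))"
    hence a: "a < N" and b: "b < N" by auto
    have "s a * s a = u (e a)" "0 < s a" "0 < s b" using ue[OF a] ue[OF b] by (auto simp: s_def)
    thus "up_laplacian_matrix K w n $$ (a,b) = mat N N (\<lambda>(a,b). S $$ (a,b) * s b / s a) $$ (a,b)"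
      using up_laplacian_matrix_entry[OF sc a[unfolded N_def] b[unfolded N_def] u_w zero] a b
      by (simp add: S_def sym_up_laplacian_matrix_def Let_def N_def[symmetric] e_def[symmetric]
          s_def[symmetric] field_simps)
  qed (simp_all add: up_laplacian_matrix_def Let_def N_def)
  moreover have "similar_mat (mat N N (\<lambda>(a,b). S $$ (a,b) * s b / s a)) S"
    by (rule similar_mat_diagonal_scaling[OF S]) (use ue in \<open>force simp: s_def\<close>)
  ultimately show ?thesis unfolding S_def by simp
qed

lemma up_eigenbasis_exists:
  fixes K :: "'v::linorder set set"
  assumes sc: "simplicial_complex K"
    and u_pos: "\<And>F. F \<in> faces n K \<Longrightarrow> 0 < u F"
    and u_w: "\<And>F. F \<in> faces n K \<Longrightarrow> w F \<noteq> 0 \<Longrightarrow> u F = w F"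
    and zero: "\<And>F G. F \<in> faces n K \<Longrightarrow> G \<in> faces (Suc n) K \<Longrightarrow> F \<subseteq> G \<Longrightarrow> w F = 0 \<Longrightarrow> w G = 0"
    and lam: "sorted_eigenvalues (up_laplacian_matrix K w n) (card (faces n K)) lam"
  obtains phi where "up_eigenbasis K w n u lam phi"
proof -
  define N where "N = card (faces n K)"
  define e where "e = face_enum (faces n K)"
  define S where "S = sym_up_laplacian_matrix K w n u"
  have e: "bij_betw e {..<card (faces n K)} (faces n K)"
    unfolding e_def by (rule face_enum_bij[OF finite_faces[OF sc]])
  have S: "S \<in> carrier_mat N N" unfolding S_def N_def by (rule sym_up_laplacian_matrix_carrier)
  have "char_poly S = char_poly (up_laplacian_matrix K w n)"
    using char_poly_similar[OF similar_sym_up_laplacian_matrix[OF sc u_pos u_w zero]]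
    unfolding S_def by simp
  also have "\<dots> = (\<Prod>x\<leftarrow>map (\<lambda>i. lam (Suc i)) [0..<N]. [:- x, 1:])"
    using lam unfolding sorted_eigenvalues_def N_def[symmetric]
    by (simp add: prod.atLeast1_atMost_eq lessThan_atLeast0 o_def
        prod.distinct_set_conv_list[symmetric])
  finally obtain U where U: "U \<in> carrier_mat N N" and UU: "transpose_mat U * U = 1\<^sub>m N"
    and USU: "transpose_mat U * S * U = mat_diag N (\<lambda>j. map (\<lambda>i. lam (Suc i)) [0..<N] ! j)"
    using real_symmetric_orthogonally_diagonalizable[OF S
        sym_up_laplacian_matrix_symmetric[of K w n u, folded S_def]] by blast
  have "coboundary_form K w n (column_cochain e N u U j) (column_cochain e N u U k)
      = (if j = k then lam (Suc j) else 0)" if jk: "j < N" "k < N" for j k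
  proof -
    have "coboundary_form K w n (column_cochain e N u U j) (column_cochain e N u U k)
        = (\<Sum>a<N. \<Sum>b<N. U $$ (a,j) * S $$ (a,b) * U $$ (b,k))"
      unfolding column_cochain_def coboundary_form_sums
      by (intro sum.cong refl) (simp add: S_def sym_up_laplacian_matrix_def Let_def N_def e_def)
    also have "\<dots> = (transpose_mat U * S * U) $$ (j,k)"
      by (rule transpose_mult_mult_entry[OF U S jk, symmetric])
    finally show ?thesis using jk by (simp add: USU mat_diag_def)
  qed
  thus thesis
    using that[of "column_cochain e N u U"] U UU unfolding up_eigenbasis_def N_def
    by (simp add: column_cochain_cochain[OF sc e] cochain_inner_column_cochains[OF sc e u_pos]
        orthogonal_mat_sums(1) column_cochain_expansion[OF sc e u_pos])
qed

section \<open>Rayleigh quotients and the range of the spectrum\<close>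

context
  fixes K :: "'v::linorder set set" and w :: "'v set \<Rightarrow> real" and n :: nat
    and u :: "'v set \<Rightarrow> real" and lam :: "nat \<Rightarrow> real" and phi :: "nat \<Rightarrow> 'v set \<Rightarrow> real"
  assumes eb: "up_eigenbasis K w n u lam phi"
begin

lemma up_eigenbasis_expansion:
  "f \<in> cochains n K \<Longrightarrow> f = (\<lambda>x. \<Sum>j<card (faces n K). cochain_inner K n u f (phi j) * phi j x)"
  using eb unfolding up_eigenbasis_def by blast

lemma up_eigenbasis_combination_cochain:
  assumes "J \<subseteq> {..<card (faces n K)}"
  shows "(\<lambda>x. \<Sum>j\<in>J. c j * phi j x) \<in> cochains n K"
  using eb assms unfolding up_eigenbasis_def cochains_def by (auto intro!: sum.neutral)

lemma up_eigenbasis_orthonormal: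
  "j < card (faces n K) \<Longrightarrow> k < card (faces n K)
    \<Longrightarrow> cochain_inner K n u (phi j) (phi k) = (if j = k then 1 else 0)"
  "j < card (faces n K) \<Longrightarrow> k < card (faces n K)
    \<Longrightarrow> coboundary_form K w n (phi j) (phi k) = (if j = k then lam (Suc j) else 0)"
  using eb unfolding up_eigenbasis_def by auto

lemma cochain_inner_eigen_combination_basis:
  assumes J: "J \<subseteq> {..<card (faces n K)}" and k: "k < card (faces n K)"
  shows "cochain_inner K n u (\<lambda>x. \<Sum>j\<in>J. c j * phi j x) (phi k) = (if k \<in> J then c k else 0)"
proof -
  have "cochain_inner K n u (\<lambda>x. \<Sum>j\<in>J. c j * phi j x) (phi k)
      = (\<Sum>j\<in>J. if j = k then c k else 0)"
    unfolding cochain_inner_sum_left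
    by (rule sum.cong[OF refl]) (use J k in \<open>auto simp: up_eigenbasis_orthonormal\<close>)
  thus ?thesis using finite_subset[OF J] by simp
qed

lemma cochain_inner_eigen_combination:
  assumes J: "J \<subseteq> {..<card (faces n K)}"
  shows "cochain_inner K n u (\<lambda>x. \<Sum>j\<in>J. c j * phi j x) (\<lambda>x. \<Sum>j\<in>J. c j * phi j x)
    = (\<Sum>j\<in>J. (c j)\<^sup>2)"
proof -
  have "j \<in> J \<Longrightarrow> j < card (faces n K)" for j using J by auto
  thus ?thesis
    unfolding cochain_inner_commute[of K n u "\<lambda>x. \<Sum>j\<in>J. c j * phi j x"] cochain_inner_sum_left
    by (intro sum.cong refl, subst cochain_inner_commute)
      (simp add: cochain_inner_eigen_combination_basis[OF J] power2_eq_square)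
qed

lemma coboundary_form_eigen_combination:
  assumes J: "J \<subseteq> {..<card (faces n K)}"
  shows "coboundary_form K w n (\<lambda>x. \<Sum>j\<in>J. c j * phi j x) (\<lambda>x. \<Sum>j\<in>J. c j * phi j x)
    = (\<Sum>j\<in>J. lam (Suc j) * (c j)\<^sup>2)"
proof -
  have "coboundary_form K w n (phi i) (phi j) = (if i = j then lam (Suc j) else 0)"
    if "i \<in> J" "j \<in> J" for i j
    using J that up_eigenbasis_orthonormal(2)[of i j] by (simp add: subset_iff)
  hence "coboundary_form K w n (\<lambda>x. \<Sum>j\<in>J. c j * phi j x) (\<lambda>x. \<Sum>j\<in>J. c j * phi j x)
      = (\<Sum>i\<in>J. \<Sum>j\<in>J. if i = j then c j * c j * lam (Suc j) else 0)"
    unfolding coboundary_form_sums by (intro sum.cong refl) auto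
  thus ?thesis using finite_subset[OF J] by (simp add: power2_eq_square ac_simps)
qed

lemma up_eigenbasis_rayleigh_upper:
  fixes c :: "nat \<Rightarrow> real"
  assumes m: "m \<le> card (faces n K)" and lam_le: "\<And>j. j < m \<Longrightarrow> lam (Suc j) \<le> x"
  defines "f \<equiv> \<lambda>y. \<Sum>j<m. c j * phi j y"
  shows "coboundary_form K w n f f \<le> x * cochain_inner K n u f f"
proof -
  have J: "{..<m} \<subseteq> {..<card (faces n K)}" using m by auto
  show ?thesis
    unfolding f_def coboundary_form_eigen_combination[OF J] cochain_inner_eigen_combination[OF J]
      sum_distrib_left
    by (rule sum_mono) (simp add: lam_le mult_right_mono)
qed

lemma up_eigenbasis_rayleigh_lower:
  assumes f: "f \<in> cochains n K" and orth: "\<And>j. j < m \<Longrightarrow> cochain_inner K n u f (phi j) = 0"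
    and lam_ge: "\<And>j. m \<le> j \<Longrightarrow> j < card (faces n K) \<Longrightarrow> x \<le> lam (Suc j)"
  shows "x * cochain_inner K n u f f \<le> coboundary_form K w n f f"
proof -
  define N where "N = card (faces n K)"
  define d where "d j = cochain_inner K n u f (phi j)" for j
  have J: "{m..<N} \<subseteq> {..<card (faces n K)}" unfolding N_def by auto
  have "f = (\<lambda>y. \<Sum>j<N. d j * phi j y)"
    unfolding d_def N_def by (rule up_eigenbasis_expansion[OF f])
  also have "\<dots> = (\<lambda>y. \<Sum>j\<in>{m..<N}. d j * phi j y)"
    by (rule ext, rule sum.mono_neutral_right) (auto simp: d_def orth)
  finally have f_eq: "f = (\<lambda>y. \<Sum>j\<in>{m..<N}. d j * phi j y)" .
  show ?thesis
    unfolding f_eq coboundary_form_eigen_combination[OF J] cochain_inner_eigen_combination[OF J]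
      sum_distrib_left
    by (rule sum_mono) (simp add: lam_ge N_def mult_right_mono)
qed

lemma up_eigenvalue_nonneg:
  assumes "\<And>G. G \<in> faces (Suc n) K \<Longrightarrow> 0 \<le> w G" and "j < card (faces n K)"
  shows "0 \<le> lam (Suc j)"
  using coboundary_form_nonneg[where K = K and w = w and n = n and f = "phi j", OF assms(1)]
    up_eigenbasis_orthonormal(2)[OF assms(2,2)] by simp

lemma up_eigenvalue_le:
  assumes bound: "\<And>f. coboundary_form K w n f f \<le> b * cochain_inner K n w f f" and "0 \<le> b"
    and w_u: "\<And>F. F \<in> faces n K \<Longrightarrow> w F \<le> u F" and j: "j < card (faces n K)"
  shows "lam (Suc j) \<le> b"
proof -
  have "lam (Suc j) = coboundary_form K w n (phi j) (phi j)"
    using up_eigenbasis_orthonormal(2)[OF j j] by simp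
  also have "\<dots> \<le> b * cochain_inner K n w (phi j) (phi j)" by (rule bound)
  also have "\<dots> \<le> b * cochain_inner K n u (phi j) (phi j)"
    using \<open>0 \<le> b\<close> by (intro mult_left_mono cochain_inner_mono_weight w_u)
  finally show ?thesis using up_eigenbasis_orthonormal(1)[OF j j] by simp
qed

end

lemma cobdry_square_le:
  assumes sc: "simplicial_complex K" and G: "G \<in> faces (Suc n) K"
  shows "(cobdry K n f G)\<^sup>2 \<le> (real n + 2) * (\<Sum>F\<in>{F\<in>faces n K. F \<subseteq> G}. (f F)\<^sup>2)"
proof -
  have "(cobdry K n f G)\<^sup>2 = (\<Sum>v\<in>G. (-1) ^ vidx v G * f (G - {v}))\<^sup>2"
    using G unfolding cobdry_def by simp
  also have "\<dots> \<le> (\<Sum>v\<in>G. ((-1) ^ vidx v G * f (G - {v}))\<^sup>2) * card G"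
    by (rule sum_squared_le_sum_of_squares)
  also have "(\<Sum>v\<in>G. ((-1) ^ vidx v G * f (G - {v}))\<^sup>2) = (\<Sum>v\<in>G. (f (G - {v}))\<^sup>2)"
  proof -
    have "((-1::real) ^ k)\<^sup>2 = 1" for k by (cases "even k") simp_all
    thus ?thesis by (simp add: power_mult_distrib)
  qed
  also have "\<dots> = (\<Sum>F\<in>{F\<in>faces n K. F \<subseteq> G}. (f F)\<^sup>2)"
    by (rule sum_codim_one_faces[OF sc G, of "\<lambda>_ F. (f F)\<^sup>2"])
  finally show ?thesis using G by (simp add: faces_iff algebra_simps)
qed

lemma normalizing_cofaces_le:
  assumes norm: "normalizing K w n" and F: "F \<in> faces n K" and "0 \<le> w F"
  shows "(\<Sum>G\<in>{G\<in>faces (Suc n) K. F \<subseteq> G}. w G) \<le> w F"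
proof -
  have eq: "{G\<in>faces (Suc n) K. F \<subseteq> G} = {G\<in>faces (Suc n) K. F \<subset> G}"
    using F by (auto simp: faces_iff)
  show ?thesis
  proof (cases "is_facet K F")
    case True
    hence empty: "{G\<in>faces (Suc n) K. F \<subset> G} = {}"
      unfolding is_facet_def by (auto simp: faces_iff)
    show ?thesis unfolding eq empty using \<open>0 \<le> w F\<close> by simp
  next
    case False
    thus ?thesis using eq norm F unfolding normalizing_def by simp
  qed
qed

text \<open>This is where the bound \<open>n + 2\<close> on the spectrum, used for the indices beyond \<open>N\<close>,
  comes from.\<close>

lemma coboundary_form_le_normalizing:
  assumes sc: "simplicial_complex K" and norm: "normalizing K w n"
    and w_nonneg: "\<And>F. F \<in> K \<Longrightarrow> 0 \<le> w F"
  shows "coboundary_form K w n f f \<le> (real n + 2) * cochain_inner K n w f f"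
proof -
  have "coboundary_form K w n f f
      \<le> (\<Sum>G\<in>faces (Suc n) K. w G * ((real n + 2) * (\<Sum>F\<in>{F\<in>faces n K. F \<subseteq> G}. (f F)\<^sup>2)))"
    unfolding coboundary_form_def cochain_inner_def
  proof (rule sum_mono)
    fix G assume G: "G \<in> faces (Suc n) K"
    hence "0 \<le> w G" using w_nonneg by (simp add: faces_iff)
    thus "w G * cobdry K n f G * cobdry K n f G
        \<le> w G * ((real n + 2) * (\<Sum>F\<in>{F\<in>faces n K. F \<subseteq> G}. (f F)\<^sup>2))"
      using mult_left_mono[OF cobdry_square_le[OF sc G]] by (simp add: power2_eq_square mult.assoc)
  qed
  also have "\<dots> = (real n + 2) * (\<Sum>G\<in>faces (Suc n) K. \<Sum>F\<in>{F\<in>faces n K. F \<subseteq> G}. (f F)\<^sup>2 * w G)"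
    by (simp add: sum_distrib_left sum_distrib_right ac_simps)
  also have "\<dots> = (real n + 2) * (\<Sum>F\<in>faces n K. \<Sum>G\<in>{G\<in>faces (Suc n) K. F \<subseteq> G}. (f F)\<^sup>2 * w G)"
    by (subst sum.swap_restrict) (simp_all add: finite_faces[OF sc])
  also have "\<dots> = (real n + 2) * (\<Sum>F\<in>faces n K. (f F)\<^sup>2 * (\<Sum>G\<in>{G\<in>faces (Suc n) K. F \<subseteq> G}. w G))"
    by (simp add: sum_distrib_left)
  also have "\<dots> \<le> (real n + 2) * cochain_inner K n w f f"
    unfolding cochain_inner_def
  proof (intro mult_left_mono sum_mono)
    fix F assume F: "F \<in> faces n K"
    hence "(\<Sum>G\<in>{G\<in>faces (Suc n) K. F \<subseteq> G}. w G) \<le> w F"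
      using normalizing_cofaces_le[OF norm] w_nonneg by (simp add: faces_iff)
    hence "(f F)\<^sup>2 * (\<Sum>G\<in>{G\<in>faces (Suc n) K. F \<subseteq> G}. w G) \<le> (f F)\<^sup>2 * w F"
      by (rule mult_left_mono) simp
    thus "(f F)\<^sup>2 * (\<Sum>G\<in>{G\<in>faces (Suc n) K. F \<subseteq> G}. w G) \<le> w F * f F * f F"
      by (simp add: power2_eq_square mult_ac)
  qed simp
  finally show ?thesis .
qed

lemma normalized_up_eigenvalue_range:
  assumes sc: "simplicial_complex K" and eb: "up_eigenbasis K w n u lam phi"
    and norm: "normalizing K w n" and w_nonneg: "\<And>F. F \<in> K \<Longrightarrow> 0 \<le> w F"
    and w_u: "\<And>F. F \<in> faces n K \<Longrightarrow> w F \<le> u F" and k: "1 \<le> k" "k \<le> card (faces n K)"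
  shows "0 \<le> lam k" and "lam k \<le> real n + 2"
  using up_eigenvalue_nonneg[OF eb, of "k - 1"] w_u k
    up_eigenvalue_le[OF eb coboundary_form_le_normalizing[OF sc norm w_nonneg], of "k - 1"]
  by (auto simp: faces_iff w_nonneg)

section \<open>Dimension counting in function spaces\<close>

interpretation fvs: vector_space "\<lambda>(c::real) (f::'a \<Rightarrow> real) x. c * f x"
  by unfold_locales (auto simp: fun_eq_iff algebra_simps)

lemma sum_fun_apply: "(\<Sum>i\<in>A. g i) x = (\<Sum>i\<in>A. (g i x :: real))"
  by (induct A rule: infinite_finite_induct) auto

lemma span_point_indicators:
  assumes "finite A" and "\<And>z. z \<notin> A \<Longrightarrow> g z = 0"
  shows "g \<in> fvs.span (point_indicator ` A)"
proof -
  have "g = (\<Sum>a\<in>A. (\<lambda>x. g a * point_indicator a x))"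
    using assms
    by (auto simp: sum_fun_apply point_indicator_def if_distrib[of "(*) _"] cong: if_cong)
  also have "\<dots> \<in> fvs.span (point_indicator ` A)"
    by (intro fvs.span_sum fvs.span_scale fvs.span_base) auto
  finally show ?thesis .
qed

lemma inj_point_indicator: "inj point_indicator"
  unfolding inj_def point_indicator_def by (metis one_neq_zero)

lemma independent_point_indicators:
  assumes fin: "finite A" shows "fvs.independent (point_indicator ` A)"
proof
  assume "fvs.dependent (point_indicator ` A)"
  then obtain u a where a: "a \<in> A" "u (point_indicator a) \<noteq> 0"
    and s: "(\<Sum>v\<in>point_indicator ` A. (\<lambda>x. u v * v x)) = 0"
    using fvs.dependent_finite[of "point_indicator ` A"] fin by auto
  have "0 = (\<Sum>v\<in>point_indicator ` A. u v * v a)"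
    using fun_cong[OF s, of a] by (simp add: sum_fun_apply)
  also have "\<dots> = (\<Sum>b\<in>A. u (point_indicator b) * point_indicator b a)"
    by (subst sum.reindex[OF inj_on_subset[OF inj_point_indicator]]) auto
  also have "\<dots> = u (point_indicator a)"
    using a fin by (simp add: point_indicator_def if_distrib[of "(*) _"] cong: if_cong)
  finally show False using a by simp
qed

lemma rdim_cochains:
  assumes "finite (faces j K)" shows "rdim (cochains j K) = card (faces j K)"
proof -
  have "cochains j K \<subseteq> fvs.span (point_indicator ` faces j K)"
    using span_point_indicators[OF assms] unfolding cochains_def by blast
  moreover have "fvs.span (point_indicator ` faces j K) \<subseteq> cochains j K"
    by (rule fvs.span_minimal) (auto simp: cochains_def point_indicator_def fvs.subspace_def)
  ultimately have "cochains j K = fvs.span (point_indicator ` faces j K)" by blast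
  hence "rdim (cochains j K) = card (point_indicator ` faces j K)"
    unfolding rdim_def
    using fvs.dim_span_eq_card_independent[OF independent_point_indicators[OF assms]]
    by simp
  thus ?thesis by (simp add: card_image inj_on_subset[OF inj_point_indicator])
qed

lemma nonzero_coefficients_in_kernel:
  fixes R :: "(nat \<Rightarrow> real) \<Rightarrow> 'b \<Rightarrow> real"
  assumes add: "\<And>c d. R (\<lambda>i. c i + d i) = (\<lambda>x. R c x + R d x)"
    and scale: "\<And>a c. R (\<lambda>i. a * c i) = (\<lambda>x. a * R c x)"
    and span: "\<And>c. R c \<in> fvs.span S" and S: "finite S" "card S < m"
  obtains c where "\<And>i. m \<le> i \<Longrightarrow> c i = 0" and "\<exists>i<m. c i \<noteq> 0" and "R c = (\<lambda>_. 0)"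
proof -
  define E where "E j = R (point_indicator j)" for j
  have R_sum: "R (\<lambda>i. \<Sum>j\<in>J. a j * point_indicator j i) = (\<lambda>x. \<Sum>j\<in>J. a j * E j x)"
    if "finite J" for J a
    using that
  proof (induct J rule: finite_induct)
    case empty thus ?case using scale[of 0 "\<lambda>_. 0"] by simp
  next
    case (insert j J) thus ?case by (simp add: add scale E_def)
  qed
  have "\<exists>a. (\<exists>j<m. a j \<noteq> 0) \<and> (\<lambda>x. \<Sum>j<m. a j * E j x) = (\<lambda>_. 0)"
  proof (cases "inj_on E {..<m}")
    case True
    have "fvs.dependent (E ` {..<m})"
    proof (rule ccontr)
      assume "fvs.independent (E ` {..<m})"
      moreover have "E ` {..<m} \<subseteq> fvs.span S" using span unfolding E_def by auto
      ultimately have "card (E ` {..<m}) \<le> card S"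
        using fvs.independent_span_bound[OF S(1)] by blast
      thus False using S(2) card_image[OF True] by simp
    qed
    then obtain u where u: "\<exists>v\<in>E ` {..<m}. u v \<noteq> 0"
      and s: "(\<Sum>v\<in>E ` {..<m}. (\<lambda>x. u v * v x)) = 0"
      using fvs.dependent_finite[of "E ` {..<m}"] by auto
    have "(\<lambda>x. \<Sum>j<m. u (E j) * E j x) = (\<lambda>_. 0)"
      using s by (simp add: fun_eq_iff sum_fun_apply sum.reindex[OF True])
    thus ?thesis using u by auto
  next
    case False
    then obtain i j where "i < m" "j < m" "i \<noteq> j" "E i = E j" unfolding inj_on_def by auto
    thus ?thesis
      by (intro exI[of _ "\<lambda>k. if k = i then 1 else if k = j then -1 else 0"])
        (auto simp: if_distrib[of "\<lambda>a. a * _"] sum.If_cases Int_absorb1 cong: if_cong)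
  qed
  then obtain a where a: "\<exists>j<m. a j \<noteq> 0" and Ea: "(\<lambda>x. \<Sum>j<m. a j * E j x) = (\<lambda>_. 0)" by blast
  have c: "(\<lambda>i. \<Sum>j<m. a j * point_indicator j i) = (\<lambda>i. if i < m then a i else 0)"
    by (auto simp: point_indicator_def if_distrib[of "(*) _"] cong: if_cong)
  show thesis
    by (rule that[of "\<lambda>i. if i < m then a i else 0"]) (use a Ea R_sum[of "{..<m}" a] c in auto)
qed

lemma nonzero_coefficients_in_common_kernel:
  fixes P :: "(nat \<Rightarrow> real) \<Rightarrow> 'b \<Rightarrow> real" and l :: "nat \<Rightarrow> (nat \<Rightarrow> real) \<Rightarrow> real"
  assumes P_add: "\<And>c d. P (\<lambda>i. c i + d i) = (\<lambda>x. P c x + P d x)"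
    and P_scale: "\<And>a c. P (\<lambda>i. a * c i) = (\<lambda>x. a * P c x)"
    and l_add: "\<And>j c d. l j (\<lambda>i. c i + d i) = l j c + l j d"
    and l_scale: "\<And>j a c. l j (\<lambda>i. a * c i) = a * l j c"
    and span: "\<And>c. P c \<in> fvs.span S" and S: "finite S" and m: "card S + p < m"
  obtains c where "\<And>i. m \<le> i \<Longrightarrow> c i = 0" and "\<exists>i<m. c i \<noteq> 0" and "P c = (\<lambda>_. 0)"
    and "\<And>j. j < p \<Longrightarrow> l j c = 0"
proof -
  define emb :: "('b \<Rightarrow> real) \<Rightarrow> 'b + nat \<Rightarrow> real" where "emb g = case_sum g (\<lambda>_. 0)" for g
  define R where "R c = case_sum (P c) (\<lambda>j. if j < p then l j c else 0)" for c
  define T where "T = emb ` S \<union> point_indicator ` Inr ` {..<p}"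
  have "R c \<in> fvs.span T" for c
  proof -
    obtain u where "P c = (\<Sum>b\<in>S. (\<lambda>x. u b * b x))" using span fvs.span_finite[OF S] by blast
    hence "emb (P c) = (\<Sum>b\<in>S. (\<lambda>z. u b * emb b z))"
      by (auto simp: emb_def fun_eq_iff sum_fun_apply split: sum.split)
    also have "\<dots> \<in> fvs.span T"
      unfolding T_def by (intro fvs.span_sum fvs.span_scale fvs.span_base) auto
    finally have "emb (P c) \<in> fvs.span T" .
    moreover have "case_sum (\<lambda>_. 0) (\<lambda>j. if j < p then l j c else 0)
        \<in> fvs.span (point_indicator ` Inr ` {..<p})"
      by (rule span_point_indicators) (auto split: sum.split)
    hence "case_sum (\<lambda>_. 0) (\<lambda>j. if j < p then l j c else 0) \<in> fvs.span T"
      unfolding T_def by (rule subsetD[OF fvs.span_mono, rotated]) auto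
    ultimately have "emb (P c) + case_sum (\<lambda>_. 0) (\<lambda>j. if j < p then l j c else 0) \<in> fvs.span T"
      by (rule fvs.span_add)
    moreover have "R c = emb (P c) + case_sum (\<lambda>_. 0) (\<lambda>j. if j < p then l j c else 0)"
      by (auto simp: R_def emb_def fun_eq_iff split: sum.split)
    ultimately show ?thesis by simp
  qed
  moreover have "card T < m"
  proof -
    have "card T \<le> card (emb ` S) + card (point_indicator ` Inr ` {..<p} :: ('b + nat \<Rightarrow> real) set)"
      unfolding T_def by (rule card_Un_le)
    also have "\<dots> \<le> card S + p"
      by (intro add_mono card_image_le S order_trans[OF card_image_le]) (auto simp: card_image)
    finally show ?thesis using m by simp
  qed
  moreover have "R (\<lambda>i. c i + d i) = (\<lambda>x. R c x + R d x)" "R (\<lambda>i. a * c i) = (\<lambda>x. a * R c x)"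
    for a c d
    by (auto simp: R_def P_add P_scale l_add l_scale fun_eq_iff split: sum.split)
  moreover have "finite T" unfolding T_def using S by simp
  ultimately obtain c where c: "\<And>i. m \<le> i \<Longrightarrow> c i = 0" "\<exists>i<m. c i \<noteq> 0"
    and Rc: "R c = (\<lambda>_. 0)"
    using nonzero_coefficients_in_kernel[of R T m] by metis
  have "P c x = 0" for x using fun_cong[OF Rc, of "Inl x"] by (simp add: R_def)
  moreover have "l j c = 0" if "j < p" for j
    using fun_cong[OF Rc, of "Inr j"] that by (simp add: R_def)
  ultimately show thesis using c by (intro that) auto
qed

section \<open>Interlacing\<close>

lemma combination_add:
  fixes phi :: "nat \<Rightarrow> 'a \<Rightarrow> real"
  shows "(\<lambda>x. \<Sum>j<m. (c j + d j) * phi j x) = (\<lambda>x. (\<Sum>j<m. c j * phi j x) + (\<Sum>j<m. d j * phi j x))"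
  by (simp add: algebra_simps sum.distrib)

lemma combination_scale:
  fixes phi :: "nat \<Rightarrow> 'a \<Rightarrow> real"
  shows "(\<lambda>x. \<Sum>j<m. (a * c j) * phi j x) = (\<lambda>x. a * (\<Sum>j<m. c j * phi j x))"
  by (simp add: sum_distrib_left ac_simps)

lemma up_eigenvalue_interlacing_upper:
  fixes K H :: "'v::linorder set set"
  assumes scH: "simplicial_complex H"
    and eK: "up_eigenbasis K wK n wK lam phiK" and eL: "up_eigenbasis K wL n uL theta phiL"
    and w_eq: "\<And>G. G \<in> faces (Suc n) K \<Longrightarrow> G \<notin> H \<Longrightarrow> wL G = wK G"
    and u_eq: "\<And>F. F \<in> faces n K \<Longrightarrow> F \<notin> H \<Longrightarrow> uL F = wK F"
    and lam_mono: "\<And>i j. 1 \<le> i \<Longrightarrow> i \<le> j \<Longrightarrow> j \<le> card (faces n K) \<Longrightarrow> lam i \<le> lam j"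
    and theta_mono: "\<And>i j. 1 \<le> i \<Longrightarrow> i \<le> j \<Longrightarrow> j \<le> card (faces n K) \<Longrightarrow> theta i \<le> theta j"
    and k: "1 \<le> k" "k + card (faces n H) \<le> card (faces n K)"
  shows "theta k \<le> lam (k + card (faces n H))"
proof -
  define m where "m = k + card (faces n H)"
  define f where "f c = (\<lambda>x. \<Sum>j<m. c j * phiK j x)" for c
  have m: "{..<m} \<subseteq> {..<card (faces n K)}" using k unfolding m_def by auto
  obtain c where nz: "\<exists>i<m. c i \<noteq> 0"
    and vanish: "(\<lambda>F. if F \<in> faces n H then f c F else 0) = (\<lambda>_. 0)"
    and orth: "\<And>j. j < k - 1 \<Longrightarrow> cochain_inner K n uL (f c) (phiL j) = 0"
  proof (rule nonzero_coefficients_in_common_kernel[where S = "point_indicator ` faces n H"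
        and P = "\<lambda>c F. if F \<in> faces n H then f c F else 0" and p = "k - 1"
        and l = "\<lambda>j c. cochain_inner K n uL (f c) (phiL j)"])
    show "card (point_indicator ` faces n H) + (k - 1) < m"
      using card_image_le[OF finite_faces[OF scH], of point_indicator n] k
      unfolding m_def by linarith
  qed (auto simp: f_def combination_add combination_scale cochain_inner_add_left
      cochain_inner_scale_left finite_faces[OF scH] span_point_indicators fun_eq_iff)
  define g where "g = f c"
  have cobdry_H: "cobdry K n g G = 0" if "G \<in> faces (Suc n) K" "G \<in> H" for G
    using cobdry_subcomplex[OF scH that] vanish by (simp add: g_def cobdry_zero)
  have g_H: "F \<in> faces n H \<Longrightarrow> g F = 0" for F using fun_cong[OF vanish, of F] by (simp add: g_def)
  have norm_eq: "cochain_inner K n uL g g = cochain_inner K n wK g g"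
    by (rule cochain_inner_cong_weight) (use u_eq g_H in \<open>auto simp: faces_iff\<close>)
  have norm_pos: "0 < cochain_inner K n wK g g"
    using nz unfolding g_def f_def cochain_inner_eigen_combination[OF eK m]
    by (auto intro: sum_pos2)
  have "g \<in> cochains n K"
    unfolding g_def f_def by (rule up_eigenbasis_combination_cochain[OF eK m])
  hence "theta k * cochain_inner K n uL g g \<le> coboundary_form K wL n g g"
    using k by (intro up_eigenbasis_rayleigh_lower[OF eL, where m = "k - 1"])
      (auto simp: orth[folded g_def] intro: theta_mono)
  also have "\<dots> = coboundary_form K wK n g g"
    by (rule coboundary_form_cong_weight) (use w_eq cobdry_H in auto)
  also have "\<dots> \<le> lam m * cochain_inner K n wK g g"
    using k unfolding g_def f_def m_def
    by (intro up_eigenbasis_rayleigh_upper[OF eK]) (auto intro: lam_mono)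
  finally show ?thesis using norm_pos unfolding norm_eq m_def by simp
qed

lemma up_eigenvalue_interlacing_lower:
  fixes K H :: "'v::linorder set set"
  assumes scH: "simplicial_complex H"
    and eK: "up_eigenbasis K wK n wK lam phiK" and eL: "up_eigenbasis K wL n uL theta phiL"
    and w_eq: "\<And>G. G \<in> faces (Suc n) K \<Longrightarrow> G \<notin> H \<Longrightarrow> wL G = wK G"
    and u_le: "\<And>F. F \<in> faces n K \<Longrightarrow> uL F \<le> wK F"
    and lam_mono: "\<And>i j. 1 \<le> i \<Longrightarrow> i \<le> j \<Longrightarrow> j \<le> card (faces n K) \<Longrightarrow> lam i \<le> lam j"
    and theta_mono: "\<And>i j. 1 \<le> i \<Longrightarrow> i \<le> j \<Longrightarrow> j \<le> card (faces n K) \<Longrightarrow> theta i \<le> theta j"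
    and theta_nonneg: "0 \<le> theta k"
    and B: "finite B" "coboundaries (Suc n) H \<subseteq> fvs.span B"
    and k: "card B < k" "k \<le> card (faces n K)"
  shows "lam (k - card B) \<le> theta k"
proof -
  define f where "f c = (\<lambda>x. \<Sum>j<k. c j * phiL j x)" for c
  define restr where "restr g = (\<lambda>F. if F \<in> faces n H then g F else 0)" for g :: "'v set \<Rightarrow> real"
  have k': "{..<k} \<subseteq> {..<card (faces n K)}" using k by auto
  have span_B: "cobdry H n (restr g) \<in> fvs.span B" for g
    using B(2) unfolding coboundaries_def cochains_def restr_def by auto
  have restr_lin: "restr (\<lambda>x. g x + h x) = (\<lambda>x. restr g x + restr h x)"
    "restr (\<lambda>x. a * g x) = (\<lambda>x. a * restr g x)" for g h a
    unfolding restr_def by auto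
  obtain c where nz: "\<exists>i<k. c i \<noteq> 0" and closed: "cobdry H n (restr (f c)) = (\<lambda>_. 0)"
    and orth: "\<And>j. j < k - card B - 1 \<Longrightarrow> cochain_inner K n wK (f c) (phiK j) = 0"
    by (rule nonzero_coefficients_in_common_kernel[where S = B and m = k and p = "k - card B - 1"
          and P = "\<lambda>c. cobdry H n (restr (f c))"
          and l = "\<lambda>j c. cochain_inner K n wK (f c) (phiK j)"])
      (use B(1) k span_B in \<open>auto simp: f_def restr_lin combination_add combination_scale cobdry_add
          cobdry_scale cochain_inner_add_left cochain_inner_scale_left fun_eq_iff\<close>)
  define g where "g = f c"
  have g: "g \<in> cochains n K"
    unfolding g_def f_def by (rule up_eigenbasis_combination_cochain[OF eL k'])
  have cobdry_H: "cobdry K n g G = 0" if "G \<in> faces (Suc n) K" "G \<in> H" for G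
    using cobdry_subcomplex[OF scH that] closed by (simp add: g_def restr_def fun_eq_iff)
  have norm_pos: "0 < cochain_inner K n uL g g"
    using nz unfolding g_def f_def cochain_inner_eigen_combination[OF eL k']
    by (auto intro: sum_pos2)
  have norm_le: "cochain_inner K n uL g g \<le> cochain_inner K n wK g g"
    by (rule cochain_inner_mono_weight[OF u_le])
  have "lam (k - card B) * cochain_inner K n wK g g \<le> coboundary_form K wK n g g"
    using k g by (intro up_eigenbasis_rayleigh_lower[OF eK, where m = "k - card B - 1"])
      (auto simp: orth[folded g_def] intro: lam_mono)
  also have "\<dots> = coboundary_form K wL n g g"
    by (rule coboundary_form_cong_weight) (metis w_eq cobdry_H)
  also have "\<dots> \<le> theta k * cochain_inner K n uL g g"
    using k unfolding g_def f_def
    by (intro up_eigenbasis_rayleigh_upper[OF eL]) (auto intro: theta_mono)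
  also have "\<dots> \<le> theta k * cochain_inner K n wK g g"
    by (rule mult_left_mono[OF norm_le theta_nonneg])
  finally show ?thesis using norm_pos norm_le by simp
qed

definition diff_inner_weight ::
  "'v set set \<Rightarrow> ('v set \<Rightarrow> real) \<Rightarrow> 'v set set \<Rightarrow> ('v set \<Rightarrow> real) \<Rightarrow> 'v set \<Rightarrow> real" where
  "diff_inner_weight K wK H wH F =
     (if diff_weight K wK H wH F \<noteq> 0 then diff_weight K wK H wH F else wK F)"

lemma proper_difference_weights:
  assumes K: "weighted_complex K wK" and H: "weighted_complex H wH" and HK: "sub_wcomplex H wH K wK"
    and F: "F \<in> K"
  defines "wL \<equiv> diff_weight K wK H wH" and "uL \<equiv> diff_inner_weight K wK H wH"
  shows "0 \<le> wL F" and "wL F \<le> uL F" and "uL F \<le> wK F" and "0 < uL F"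
    and "wL F \<noteq> 0 \<Longrightarrow> uL F = wL F"
    and "F \<notin> H \<Longrightarrow> wL F = wK F" and "F \<notin> H \<Longrightarrow> uL F = wK F"
  using assms unfolding weighted_complex_def sub_wcomplex_def wL_def uL_def diff_inner_weight_def
    diff_weight_def
  by (auto simp: less_imp_le)

lemma proper_difference_zero_upward:
  assumes K: "weighted_complex K wK" and H: "weighted_complex H wH" and HK: "sub_wcomplex H wH K wK"
    and diff: "proper_difference_exists K wK H wH"
    and "F \<in> faces n K" and "G \<in> faces (Suc n) K" and "F \<subseteq> G"
    and "diff_weight K wK H wH F = 0"
  shows "diff_weight K wK H wH G = 0"
proof (rule ccontr)
  assume "diff_weight K wK H wH G \<noteq> 0"
  moreover have "G \<in> K" "F \<noteq> {}" using assms(5,6) by (auto simp: faces_iff)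
  ultimately have "G \<in> {F\<in>K. diff_weight K wK H wH F > 0}"
    using proper_difference_weights(1)[OF K H HK] by (simp add: order_less_le)
  hence "F \<in> {F\<in>K. diff_weight K wK H wH F > 0}"
    using simplicial_complex_subface[OF diff[unfolded proper_difference_exists_def]] assms(7)
      \<open>F \<noteq> {}\<close> by blast
  thus False using assms(8) by simp
qed

lemma coboundaries_subset_span:
  assumes "simplicial_complex H"
  shows "coboundaries (Suc n) H \<subseteq> fvs.span (point_indicator ` faces (Suc n) H)"
  using span_point_indicators[OF finite_faces[OF assms]]
  unfolding coboundaries_def by (auto simp: cobdry_def)

lemma rdim_coboundaries_top:
  assumes sc: "simplicial_complex H" and dim: "complex_dim H (Suc n)"
  shows "rdim (cochains (Suc n) H) - cohom_dim (Suc n) H = rdim (coboundaries (Suc n) H)"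
proof -
  have "faces (Suc (Suc n)) H = {}"
    using dim unfolding complex_dim_def faces_def by fastforce
  hence cocycles: "cocycles (Suc n) H = cochains (Suc n) H"
    unfolding cocycles_def cobdry_def by simp
  have "rdim (coboundaries (Suc n) H) \<le> card (point_indicator ` faces (Suc n) H)"
    unfolding rdim_def
    by (rule fvs.dim_le_card[OF coboundaries_subset_span[OF sc]]) (simp add: finite_faces[OF sc])
  also have "\<dots> \<le> rdim (cochains (Suc n) H)"
    unfolding rdim_cochains[OF finite_faces[OF sc]] by (rule card_image_le[OF finite_faces[OF sc]])
  finally show ?thesis unfolding cohom_dim_def cocycles by simp
qed

lemma finite_spanning_set_card_rdim:
  assumes "finite T" and "V \<subseteq> fvs.span T"
  obtains B where "finite B" and "V \<subseteq> fvs.span B" and "card B = rdim V"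
proof -
  obtain B where "B \<subseteq> V" "fvs.independent B" "V \<subseteq> fvs.span B" "card B = rdim V"
    unfolding rdim_def by (rule fvs.basis_exists)
  moreover from this have "finite B"
    using fvs.independent_span_bound[OF assms(1)] assms(2) by blast
  ultimately show thesis by (intro that) auto
qed

lemma coboundaries_basis:
  assumes "simplicial_complex H"
  obtains B where "finite B" and "coboundaries (Suc n) H \<subseteq> fvs.span B"
    and "card B = rdim (coboundaries (Suc n) H)"
  by (rule finite_spanning_set_card_rdim[OF _ coboundaries_subset_span[OF assms]])
    (simp add: finite_faces[OF assms])

lemma ext_eig_le_if_interlacing:
  assumes "D < k \<Longrightarrow> lam (k - D) \<le> theta" and "0 \<le> theta" and "k \<le> N"
  shows "ext_eig N t lam (int k - int D) \<le> theta"
  using assms by (auto simp: ext_eig_def nat_diff_distrib)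

lemma ext_eig_ge_if_interlacing:
  assumes "k + D \<le> N \<Longrightarrow> theta \<le> lam (k + D)" and "theta \<le> t" and "1 \<le> k"
  shows "theta \<le> ext_eig N t lam (int k + int D)"
  using assms by (auto simp: ext_eig_def nat_add_distrib)

theorem theorem2p11:
  fixes K H :: "'v::linorder set set"
    and wK wH :: "'v set \<Rightarrow> real"
    and n :: nat
    and lam theta :: "nat \<Rightarrow> real"
  assumes "weighted_complex K wK" and "complex_dim K (Suc n)"
    and "weighted_complex H wH" and "complex_dim H (Suc n)"
    and "sub_wcomplex H wH K wK"
    and "proper_difference_exists K wK H wH"
    and "normalizing K wK n"
    and "normalizing K (diff_weight K wK H wH) n"
    and "sorted_eigenvalues (up_laplacian_matrix K wK n) (card (faces n K)) lam"
    and "sorted_eigenvalues (up_laplacian_matrix K (diff_weight K wK H wH) n)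
           (card (faces n K)) theta"
  shows "\<forall>k\<in>{1..card (faces n K)}.
     ext_eig (card (faces n K)) (real n + 2) lam
        (int k - int (rdim (cochains (Suc n) H) - cohom_dim (Suc n) H)) \<le> theta k \<and>
     theta k \<le> ext_eig (card (faces n K)) (real n + 2) lam
        (int k + int (rdim (cochains n H)))"
proof -
  define wL uL where "wL = diff_weight K wK H wH" and "uL = diff_inner_weight K wK H wH"
  have sc: "simplicial_complex K" and scH: "simplicial_complex H" and wK: "\<And>F. F \<in> K \<Longrightarrow> 0 < wK F"
    using assms(1,3) unfolding weighted_complex_def by auto
  note W = proper_difference_weights[OF assms(1,3,5), folded wL_def uL_def]
  obtain phiK where eK: "up_eigenbasis K wK n wK lam phiK"
    by (rule up_eigenbasis_exists[where u = wK, OF sc _ _ _ assms(9)])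
      (auto simp: faces_iff intro: wK dest: wK)
  obtain phiL where eL: "up_eigenbasis K wL n uL theta phiL"
    by (rule up_eigenbasis_exists[where u = uL, OF sc _ _ _ assms(10)[folded wL_def]])
      (use W proper_difference_zero_upward[OF assms(1,3,5,6), folded wL_def]
        in \<open>auto simp: faces_iff\<close>)
  obtain B where B: "finite B" "coboundaries (Suc n) H \<subseteq> fvs.span B"
    and card_B: "card B = rdim (coboundaries (Suc n) H)"
    by (rule coboundaries_basis[OF scH])
  have theta_range: "0 \<le> theta k" "theta k \<le> real n + 2" if "k \<in> {1..card (faces n K)}" for k
    using normalized_up_eigenvalue_range[OF sc eL assms(8)[folded wL_def] W(1)] that W(2)
    by (auto simp: faces_iff)
  note mono = assms(9,10)[unfolded sorted_eigenvalues_def, THEN conjunct1, rule_format]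
  show ?thesis
    unfolding rdim_coboundaries_top[OF scH assms(4)] card_B[symmetric]
    unfolding rdim_cochains[OF finite_faces[OF scH]]
  proof (intro ballI conjI ext_eig_le_if_interlacing ext_eig_ge_if_interlacing)
    fix k assume k: "k \<in> {1..card (faces n K)}"
    show "lam (k - card B) \<le> theta k" if "card B < k"
      by (rule up_eigenvalue_interlacing_lower[OF scH eK eL _ _ _ _ theta_range(1)[OF k] B])
        (use W mono that k in \<open>auto simp: wL_def faces_iff\<close>)
    show "theta k \<le> lam (k + card (faces n H))" if "k + card (faces n H) \<le> card (faces n K)"
      by (rule up_eigenvalue_interlacing_upper[OF scH eK eL])
        (use W mono that k in \<open>auto simp: wL_def faces_iff\<close>)
  qed (use theta_range in auto)
qed

end
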